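(* Let $p$ be a prime, $r\ge1$, $G_0$ a finite group, $K$ a field containing a primitive $p^r$-th root of unity $\zeta$, and $\beta\in H^2(G_0,K^\times)$ such that $K^\beta G_0$ is a division algebra with center $K$. Let $k=K((s))((t))$ and $D=(K^\beta G_0\otimes_K k)\otimes_k(s,t)_{p^r}$. Then $D$ is a central division $k$-algebra, and $D\cong k^\alpha(G_0\times Z_{p^r}\times Z_{p^r})$ for some $\alpha\in H^2(G_0\times Z_{p^r}\times Z_{p^r},k^\times)$ whose restriction to $G_0$ is (the image of) $\beta$.
   Context: $(s,t)_{p^r}$ is the symbol algebra over $k$ generated by $x,y$ with $x^{p^r}=s$, $y^{p^r}=t$, $xy=\zeta yx$. Twisted group algebras $K^\beta G$ are taken with trivial action of $G$ on $K^\times$. $Z_m$ is the cyclic group of order $m$. *)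

theory Defs
  imports "HOL-Algebra.Elementary_Groups" "HOL-Computational_Algebra.Formal_Laurent_Series"
begin

text \<open>An algebra over a field 'k with finite basis B and structure constants c:
  the product of basis vectors is  e_i e_j = sum_m c i j m e_m.
  Elements are coordinate functions B -> 'k (zero outside B).\<close>

definition sc_carrier :: "'b set \<Rightarrow> ('b \<Rightarrow> 'k::zero) set" where
  "sc_carrier B = {x. \<forall>i. i \<notin> B \<longrightarrow> x i = 0}"

definition sc_mult :: "'b set \<Rightarrow> ('b \<Rightarrow> 'b \<Rightarrow> 'b \<Rightarrow> 'k::comm_ring_1)
    \<Rightarrow> ('b \<Rightarrow> 'k) \<Rightarrow> ('b \<Rightarrow> 'k) \<Rightarrow> ('b \<Rightarrow> 'k)" where
  "sc_mult B c x y = (\<lambda>m. if m \<in> B then (\<Sum>i\<in>B. \<Sum>j\<in>B. x i * y j * c i j m) else 0)"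

definition sc_unit :: "'b set \<Rightarrow> ('b \<Rightarrow> 'b \<Rightarrow> 'b \<Rightarrow> 'k::comm_ring_1) \<Rightarrow> ('b \<Rightarrow> 'k) \<Rightarrow> bool" where
  "sc_unit B c e \<longleftrightarrow> e \<in> sc_carrier B \<and>
     (\<forall>x\<in>sc_carrier B. sc_mult B c e x = x \<and> sc_mult B c x e = x)"

definition sc_center :: "'b set \<Rightarrow> ('b \<Rightarrow> 'b \<Rightarrow> 'b \<Rightarrow> 'k::comm_ring_1) \<Rightarrow> ('b \<Rightarrow> 'k) set" where
  "sc_center B c = {z \<in> sc_carrier B. \<forall>x\<in>sc_carrier B. sc_mult B c z x = sc_mult B c x z}"

definition sc_division_algebra :: "'b set \<Rightarrow> ('b \<Rightarrow> 'b \<Rightarrow> 'b \<Rightarrow> 'k::field) \<Rightarrow> bool" where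
  "sc_division_algebra B c \<longleftrightarrow> finite B \<and>
     (\<forall>x\<in>sc_carrier B. \<forall>y\<in>sc_carrier B. \<forall>z\<in>sc_carrier B.
        sc_mult B c (sc_mult B c x y) z = sc_mult B c x (sc_mult B c y z)) \<and>
     (\<exists>e. sc_unit B c e \<and> e \<noteq> (\<lambda>_. 0) \<and>
        (\<forall>x\<in>sc_carrier B. x \<noteq> (\<lambda>_. 0) \<longrightarrow>
           (\<exists>y\<in>sc_carrier B. sc_mult B c x y = e \<and> sc_mult B c y x = e)))"

definition sc_central_division_algebra :: "'b set \<Rightarrow> ('b \<Rightarrow> 'b \<Rightarrow> 'b \<Rightarrow> 'k::field) \<Rightarrow> bool" where
  "sc_central_division_algebra B c \<longleftrightarrow> sc_division_algebra B c \<and>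
     (\<forall>e. sc_unit B c e \<longrightarrow> sc_center B c = {(\<lambda>i. a * e i) | a. True})"

definition sc_iso :: "'b set \<Rightarrow> ('b \<Rightarrow> 'b \<Rightarrow> 'b \<Rightarrow> 'k::field)
    \<Rightarrow> 'd set \<Rightarrow> ('d \<Rightarrow> 'd \<Rightarrow> 'd \<Rightarrow> 'k) \<Rightarrow> bool" where
  "sc_iso B1 c1 B2 c2 \<longleftrightarrow> (\<exists>\<phi>. bij_betw \<phi> (sc_carrier B1) (sc_carrier B2) \<and>
     (\<forall>x\<in>sc_carrier B1. \<forall>y\<in>sc_carrier B1.
        \<phi> (\<lambda>i. x i + y i) = (\<lambda>j. \<phi> x j + \<phi> y j) \<and>
        \<phi> (sc_mult B1 c1 x y) = sc_mult B2 c2 (\<phi> x) (\<phi> y)) \<and>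
     (\<forall>a. \<forall>x\<in>sc_carrier B1. \<phi> (\<lambda>i. a * x i) = (\<lambda>j. a * \<phi> x j)))"

definition sc_tensor :: "('b \<Rightarrow> 'b \<Rightarrow> 'b \<Rightarrow> 'k::comm_ring_1) \<Rightarrow> ('d \<Rightarrow> 'd \<Rightarrow> 'd \<Rightarrow> 'k)
    \<Rightarrow> ('b \<times> 'd) \<Rightarrow> ('b \<times> 'd) \<Rightarrow> ('b \<times> 'd) \<Rightarrow> 'k" where
  "sc_tensor c1 c2 = (\<lambda>(i,j) (i',j') (m,m'). c1 i i' m * c2 j j' m')"

definition sc_base_change :: "('K \<Rightarrow> 'k) \<Rightarrow> ('b \<Rightarrow> 'b \<Rightarrow> 'b \<Rightarrow> 'K) \<Rightarrow> ('b \<Rightarrow> 'b \<Rightarrow> 'b \<Rightarrow> 'k)" where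
  "sc_base_change f c = (\<lambda>i j m. f (c i j m))"

definition cocycle2 :: "('g, 'x) monoid_scheme \<Rightarrow> ('g \<Rightarrow> 'g \<Rightarrow> 'k::field) \<Rightarrow> bool" where
  "cocycle2 G \<alpha> \<longleftrightarrow>
     (\<forall>g\<in>carrier G. \<forall>h\<in>carrier G. \<alpha> g h \<noteq> 0) \<and>
     (\<forall>g\<in>carrier G. \<forall>h\<in>carrier G. \<forall>l\<in>carrier G.
        \<alpha> g h * \<alpha> (g \<otimes>\<^bsub>G\<^esub> h) l = \<alpha> h l * \<alpha> g (h \<otimes>\<^bsub>G\<^esub> l))"

definition twisted_sc :: "('g, 'x) monoid_scheme \<Rightarrow> ('g \<Rightarrow> 'g \<Rightarrow> 'k::zero)
    \<Rightarrow> 'g \<Rightarrow> 'g \<Rightarrow> 'g \<Rightarrow> 'k" where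
  "twisted_sc G \<alpha> = (\<lambda>g h m. if m = g \<otimes>\<^bsub>G\<^esub> h then \<alpha> g h else 0)"

text \<open>Symbol algebra (s,t)_n over k w.r.t. \<zeta>: generated by x,y with x^n = s, y^n = t,
  x y = \<zeta> y x; basis x^i y^j (0 \<le> i,j < n). Since y^j x^a = \<zeta>^(-ja) x^a y^j,
  x^i y^j * x^a y^b = \<zeta>^(-ja) x^(i+a) y^(j+b).\<close>
definition symbol_basis :: "nat \<Rightarrow> (nat \<times> nat) set" where
  "symbol_basis n = {0..<n} \<times> {0..<n}"

definition symbol_sc :: "nat \<Rightarrow> 'k::field \<Rightarrow> 'k \<Rightarrow> 'k
    \<Rightarrow> (nat \<times> nat) \<Rightarrow> (nat \<times> nat) \<Rightarrow> (nat \<times> nat) \<Rightarrow> 'k" where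
  "symbol_sc n \<zeta> s t = (\<lambda>(i,j) (a,b) (m,m').
     if m = (i + a) mod n \<and> m' = (j + b) mod n
     then inverse \<zeta> ^ (j * a) * (if n \<le> i + a then s else 1) * (if n \<le> j + b then t else 1)
     else 0)"

definition emb_KK :: "'a::field \<Rightarrow> 'a fls fls" where
  "emb_KK a = fls_const (fls_const a)"

definition var_s :: "'a::field fls fls" where
  "var_s = fls_const fls_X"

definition var_t :: "'a::field fls fls" where
  "var_t = fls_X"

end

theory Submission
  imports Defs "HOL-Library.Function_Algebras"
begin

unbundle fps_syntax

(* Write n = p^r, A = K^beta G0 and D = (A \<otimes>_K k) \<otimes>_k (s,t)_n.  In the basis
   G0 \<times> Z_n \<times> Z_n the structure constants of D are those of a twisted algebra
   u_g x^i y^j \<cdot> u_h x^a y^b = gamma \<cdot> u_(gh) x^(i+a) y^(j+b), where gamma is a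
   2-cocycle built from beta, powers of zeta^-1 and the carries s, t.
   1. General facts on structure-constant algebras: a finite-dimensional associative
      unital algebra without zero divisors is a division algebra (an injective linear
      map of a finite-dimensional space is onto); twisted algebras with a cocycle are
      associative and unital; being a domain is invariant under relabelling the basis.
   2. Laurent extension: if K^gamma B is a domain, then so is the algebra over K((X))
      with basis B \<times> Z_n in which x^n = X (leading-term argument).  Applied twice
      (first over K((s)), then over K((s))((t))), this shows that D is a domain,
      hence a division algebra.
   3. Centre: a central element commutes with u_1 x and u_1 y, which forces its
      support into G0 \<times> {0} \<times> {0} (zeta is primitive); each Laurent coefficient is
      then central in A, hence a multiple of 1_A.  Comparing with the unit of D shows
      that the centre of D is k \<cdot> 1_D.
   4. Relabelling Z_n \<subseteq> nat as the integers mod n identifies D with the twisted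
      group algebra k^alpha (G0 \<times> Z_n \<times> Z_n); alpha restricts to beta on G0 on the
      nose, so the required coboundary is trivial. *)

section \<open>Algebras given by structure constants\<close>

definition sc_scale :: "'k::field \<Rightarrow> ('b \<Rightarrow> 'k) \<Rightarrow> ('b \<Rightarrow> 'k)" where
  "sc_scale a x = (\<lambda>i. a * x i)"

lemma fun_sum_apply: "(sum f A) j = (\<Sum>i\<in>A. f i j)"
  by (induction A rule: infinite_finite_induct) auto

lemma vector_space_sc_scale: "vector_space (sc_scale :: 'k::field \<Rightarrow> ('b \<Rightarrow> 'k) \<Rightarrow> _)"
  by unfold_locales (auto simp: sc_scale_def fun_eq_iff algebra_simps)

lemma sc_mult_in: "sc_mult B c x y \<in> sc_carrier B"
  by (simp add: sc_mult_def sc_carrier_def)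

lemma sc_mult_cong:
  assumes "\<And>i. i \<in> B \<Longrightarrow> x i = x' i" "\<And>i. i \<in> B \<Longrightarrow> y i = y' i"
  shows "sc_mult B c x y = sc_mult B c x' y'"
  using assms by (auto simp: sc_mult_def fun_eq_iff intro!: sum.cong)

lemma sc_mult_add_right: "sc_mult B c x (y + z) = sc_mult B c x y + sc_mult B c x z"
  by (auto simp: sc_mult_def fun_eq_iff algebra_simps sum.distrib)

lemma sc_mult_diff_right:
  "sc_mult B c x (\<lambda>i. y i - z i) = (\<lambda>m. sc_mult B c x y m - sc_mult B c x z m)"
  by (auto simp: sc_mult_def fun_eq_iff algebra_simps sum_subtractf)

lemma sc_mult_scale_right: "sc_mult B c x (sc_scale a y) = sc_scale a (sc_mult B c x y)"
  and sc_mult_scale_left: "sc_mult B c (sc_scale a x) y = sc_scale a (sc_mult B c x y)"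
  by (auto simp: sc_mult_def fun_eq_iff sc_scale_def sum_distrib_left algebra_simps)

lemma sc_mult_zero_right: "sc_mult B c x (\<lambda>_. 0) = (\<lambda>_. 0)"
  by (auto simp: sc_mult_def fun_eq_iff)

lemma sc_carrier_spanned:
  assumes fin: "finite B"
  shows "sc_carrier B \<subseteq> module.span (sc_scale :: 'k::field \<Rightarrow> ('b \<Rightarrow> 'k) \<Rightarrow> _)
           ((\<lambda>i j. if j = i then 1 else 0) ` B)"
proof
  interpret vector_space "sc_scale :: 'k \<Rightarrow> ('b \<Rightarrow> 'k) \<Rightarrow> _" by (rule vector_space_sc_scale)
  fix x :: "'b \<Rightarrow> 'k" assume x: "x \<in> sc_carrier B"
  have "x = (\<Sum>i\<in>B. sc_scale (x i) (\<lambda>j. if j = i then 1 else 0))"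
    using x fin by (auto simp: sc_carrier_def sc_scale_def fun_sum_apply fun_eq_iff
        if_distrib cong: if_cong)
  also have "\<dots> \<in> span ((\<lambda>i j. if j = i then 1 else 0) ` B)"
    by (intro span_sum span_scale span_base) auto
  finally show "x \<in> span ((\<lambda>i j. if j = i then 1 else 0) ` B)" .
qed

text \<open>An injective linear map of the finite-dimensional space of coordinate vectors into
  itself is onto (it maps a basis to a basis); this is where finite dimensionality of the
  algebra enters.\<close>
lemma linear_inj_imp_onto:
  fixes L :: "('b \<Rightarrow> 'k::field) \<Rightarrow> ('b \<Rightarrow> 'k)"
  assumes fin: "finite B"
    and add: "\<And>x y. L (x + y) = L x + L y"
    and scale: "\<And>a x. L (sc_scale a x) = sc_scale a (L x)"
    and into: "\<And>x. x \<in> sc_carrier B \<Longrightarrow> L x \<in> sc_carrier B"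
    and inj: "inj_on L (sc_carrier B)"
    and e: "e \<in> sc_carrier B"
  shows "\<exists>y\<in>sc_carrier B. L y = e"
proof -
  interpret vector_space "sc_scale :: 'k \<Rightarrow> ('b \<Rightarrow> 'k) \<Rightarrow> _" by (rule vector_space_sc_scale)
  interpret lin: Vector_Spaces.linear "sc_scale :: 'k \<Rightarrow> ('b \<Rightarrow> 'k) \<Rightarrow> _" sc_scale L
    by (simp add: module_hom_iff_linear[symmetric] module_hom_def module_hom_axioms_def
          module_iff_vector_space vector_space_sc_scale add scale)
  define V :: "('b \<Rightarrow> 'k) set" where "V = sc_carrier B"
  define T :: "('b \<Rightarrow> 'k) set" where "T = (\<lambda>i j. if j = i then 1 else 0) ` B"
  have subV: "subspace V"
    unfolding subspace_def V_def sc_carrier_def sc_scale_def by auto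
  have finT: "finite T" and VT: "V \<subseteq> span T"
    using fin sc_carrier_spanned[OF fin] by (simp_all add: T_def V_def)
  obtain C where C: "C \<subseteq> V" "independent C" "V \<subseteq> span C" "card C = dim V"
    using basis_exists by blast
  have spanC: "span C = V" using C(1,3) span_minimal[OF C(1) subV] by auto
  have indep: "independent (L ` C)"
    using lin.independent_injective_image[OF C(2)] inj spanC V_def by simp
  have card: "card (L ` C) = dim V"
    using card_image[OF inj_on_subset[OF inj]] C(1,4) V_def by auto
  have LCV: "L ` C \<subseteq> V" using C(1) into V_def by auto
  obtain B' where B': "L ` C \<subseteq> B'" "B' \<subseteq> V" "independent B'" "V \<subseteq> span B'"
    using maximal_independent_subset_extend[OF LCV indep] by blast
  have "finite B'" using independent_span_bound[OF finT B'(3)] B'(2) VT by auto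
  moreover have "card B' = dim V" using basis_card_eq_dim[OF B'(2,4,3)] .
  ultimately have "B' = L ` C" using card B'(1) by (metis card_subset_eq)
  hence "V \<subseteq> L ` span C" using B'(4) lin.span_image by simp
  thus ?thesis using e spanC V_def by auto
qed

definition sc_domain :: "'b set \<Rightarrow> ('b \<Rightarrow> 'b \<Rightarrow> 'b \<Rightarrow> 'k::comm_ring_1) \<Rightarrow> bool" where
  "sc_domain B c \<longleftrightarrow> (\<forall>x\<in>sc_carrier B. \<forall>y\<in>sc_carrier B. x \<noteq> (\<lambda>_. 0) \<longrightarrow> y \<noteq> (\<lambda>_. 0)
      \<longrightarrow> sc_mult B c x y \<noteq> (\<lambda>_. 0))"

text \<open>In a finite-dimensional associative unital domain every nonzero element is
  invertible: left multiplication by it is injective, hence onto.\<close>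
lemma domain_imp_inverse:
  fixes c :: "'b \<Rightarrow> 'b \<Rightarrow> 'b \<Rightarrow> 'k::field"
  assumes fin: "finite B"
    and assoc: "\<forall>x\<in>sc_carrier B. \<forall>y\<in>sc_carrier B. \<forall>z\<in>sc_carrier B.
        sc_mult B c (sc_mult B c x y) z = sc_mult B c x (sc_mult B c y z)"
    and unit: "sc_unit B c e" and dom: "sc_domain B c"
    and x: "x \<in> sc_carrier B" "x \<noteq> (\<lambda>_. 0)"
  shows "\<exists>y\<in>sc_carrier B. sc_mult B c x y = e \<and> sc_mult B c y x = e"
proof -
  have e: "e \<in> sc_carrier B" using unit by (simp add: sc_unit_def)
  have cancel: "y = z"
    if "y \<in> sc_carrier B" "z \<in> sc_carrier B" "sc_mult B c x y = sc_mult B c x z" for y z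
  proof (rule ccontr)
    assume "y \<noteq> z"
    hence "(\<lambda>i. y i - z i) \<noteq> (\<lambda>_. 0)" by (auto simp: fun_eq_iff)
    moreover have "(\<lambda>i. y i - z i) \<in> sc_carrier B" using that by (auto simp: sc_carrier_def)
    ultimately have "sc_mult B c x (\<lambda>i. y i - z i) \<noteq> (\<lambda>_. 0)"
      using dom x unfolding sc_domain_def by blast
    thus False using that(3) by (simp add: sc_mult_diff_right)
  qed
  obtain y where y: "y \<in> sc_carrier B" "sc_mult B c x y = e"
    using linear_inj_imp_onto[where L = "sc_mult B c x", OF fin sc_mult_add_right sc_mult_scale_right sc_mult_in _ e]
    by (auto intro: inj_onI cancel)
  have "sc_mult B c x (sc_mult B c y x) = sc_mult B c (sc_mult B c x y) x"
    using assoc x y by metis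
  also have "\<dots> = sc_mult B c x e" using y unit x by (simp add: sc_unit_def)
  finally have "sc_mult B c y x = e" using cancel sc_mult_in e by blast
  thus ?thesis using y by blast
qed

lemma division_algebra_imp_domain:
  assumes "sc_division_algebra B c"
  shows "sc_domain B c"
  unfolding sc_domain_def
proof (intro ballI impI notI)
  fix x y assume x: "x \<in> sc_carrier B" and y: "y \<in> sc_carrier B" and x0: "x \<noteq> (\<lambda>_. 0)"
    and y0: "y \<noteq> (\<lambda>_. 0)" and xy: "sc_mult B c x y = (\<lambda>_. 0)"
  obtain e where e: "sc_unit B c e" and inv: "\<forall>x\<in>sc_carrier B. x \<noteq> (\<lambda>_. 0) \<longrightarrow>
           (\<exists>y\<in>sc_carrier B. sc_mult B c x y = e \<and> sc_mult B c y x = e)"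
    and assoc: "\<forall>x\<in>sc_carrier B. \<forall>y\<in>sc_carrier B. \<forall>z\<in>sc_carrier B.
        sc_mult B c (sc_mult B c x y) z = sc_mult B c x (sc_mult B c y z)"
    using assms unfolding sc_division_algebra_def by blast
  obtain x' where x': "x' \<in> sc_carrier B" "sc_mult B c x' x = e" using inv x x0 by blast
  have "y = sc_mult B c e y" using e y by (simp add: sc_unit_def)
  also have "\<dots> = sc_mult B c x' (sc_mult B c x y)" using assoc x x' y by metis
  also have "\<dots> = (\<lambda>_. 0)" using xy by (simp add: sc_mult_zero_right)
  finally show False using y0 by simp
qed

lemma sc_mult_reindex:
  assumes bij: "bij_betw \<pi> B' B"
    and c: "\<And>u v w. u \<in> B' \<Longrightarrow> v \<in> B' \<Longrightarrow> w \<in> B' \<Longrightarrow> c' u v w = c (\<pi> u) (\<pi> v) (\<pi> w)"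
    and m: "m \<in> B'"
  shows "sc_mult B c (\<lambda>i. x (inv_into B' \<pi> i)) (\<lambda>i. y (inv_into B' \<pi> i)) (\<pi> m)
       = sc_mult B' c' x y m"
proof -
  have pm: "\<pi> m \<in> B" using bij m by (auto simp: bij_betw_def)
  have inv: "inv_into B' \<pi> (\<pi> u) = u" if "u \<in> B'" for u
    using bij that by (simp add: bij_betw_def)
  have "sc_mult B c (\<lambda>i. x (inv_into B' \<pi> i)) (\<lambda>i. y (inv_into B' \<pi> i)) (\<pi> m) =
      (\<Sum>i\<in>B. \<Sum>j\<in>B. x (inv_into B' \<pi> i) * y (inv_into B' \<pi> j) * c i j (\<pi> m))"
    using pm by (simp add: sc_mult_def)
  also have "\<dots> = (\<Sum>u\<in>B'. \<Sum>v\<in>B'.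
      x (inv_into B' \<pi> (\<pi> u)) * y (inv_into B' \<pi> (\<pi> v)) * c (\<pi> u) (\<pi> v) (\<pi> m))"
    by (subst sum.reindex_bij_betw[OF bij, symmetric], rule sum.cong[OF refl],
        subst sum.reindex_bij_betw[OF bij, symmetric], rule refl)
  also have "\<dots> = sc_mult B' c' x y m"
    using m by (simp add: sc_mult_def inv c)
  finally show ?thesis .
qed

lemma domain_reindex:
  fixes c :: "'b \<Rightarrow> 'b \<Rightarrow> 'b \<Rightarrow> 'k::comm_ring_1" and c' :: "'a \<Rightarrow> 'a \<Rightarrow> 'a \<Rightarrow> 'k"
  assumes bij: "bij_betw \<pi> B' B"
    and c: "\<And>u v w. u \<in> B' \<Longrightarrow> v \<in> B' \<Longrightarrow> w \<in> B' \<Longrightarrow> c' u v w = c (\<pi> u) (\<pi> v) (\<pi> w)"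
    and dom: "sc_domain B c"
  shows "sc_domain B' c'"
  unfolding sc_domain_def
proof (intro ballI impI)
  fix x y :: "'a \<Rightarrow> 'k"
  assume x: "x \<in> sc_carrier B'" and y: "y \<in> sc_carrier B'"
    and x0: "x \<noteq> (\<lambda>_. 0)" and y0: "y \<noteq> (\<lambda>_. 0)"
  define push where
    "push f = (\<lambda>i. if i \<in> B then f (inv_into B' \<pi> i) else 0)" for f :: "'a \<Rightarrow> 'k"
  have push_nz: "push f \<noteq> (\<lambda>_. 0)"
    if f: "f \<in> sc_carrier B'" and f0: "f \<noteq> (\<lambda>_. 0)" for f
  proof -
    obtain u where u: "f u \<noteq> 0" using f0 by (metis ext)
    hence "u \<in> B'" using f by (auto simp: sc_carrier_def)
    hence "push f (\<pi> u) = f u"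
      using bij by (auto simp: push_def bij_betw_def)
    thus ?thesis using u by auto
  qed
  have "sc_mult B c (push x) (push y) \<noteq> (\<lambda>_. 0)"
    using dom push_nz[OF x x0] push_nz[OF y y0]
    unfolding sc_domain_def push_def sc_carrier_def by auto
  then obtain i where i: "sc_mult B c (push x) (push y) i \<noteq> 0" by (metis ext)
  hence "i \<in> B" by (auto simp: sc_mult_def split: if_splits)
  then obtain m where m: "m \<in> B'" "i = \<pi> m" using bij by (auto simp: bij_betw_def)
  have "sc_mult B c (push x) (push y) (\<pi> m)
      = sc_mult B c (\<lambda>i. x (inv_into B' \<pi> i)) (\<lambda>i. y (inv_into B' \<pi> i)) (\<pi> m)"
    by (simp add: sc_mult_def push_def)
  also have "\<dots> = sc_mult B' c' x y m" by (rule sc_mult_reindex[where c = c and c' = c', OF bij c m(1)])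
  finally have "sc_mult B c (push x) (push y) (\<pi> m) = sc_mult B' c' x y m" .
  thus "sc_mult B' c' x y \<noteq> (\<lambda>_. 0)" using i m by auto
qed

section \<open>Twisted algebras over a basis with a binary operation\<close>

text \<open>The structure constants of a twisted algebra: u_a u_b = gamma(a,b) u_(a \<cdot> b).
  The twisted group algebras of Defs and the algebra D all have this form.\<close>
definition tw :: "('b \<Rightarrow> 'b \<Rightarrow> 'b) \<Rightarrow> ('b \<Rightarrow> 'b \<Rightarrow> 'k::zero) \<Rightarrow> 'b \<Rightarrow> 'b \<Rightarrow> 'b \<Rightarrow> 'k" where
  "tw op \<gamma> u v w = (if w = op u v then \<gamma> u v else 0)"

lemma sc_mult_tw:
  "sc_mult B (tw op \<gamma>) x y m =
    (if m \<in> B then (\<Sum>u\<in>B. \<Sum>v\<in>B. if op u v = m then x u * y v * \<gamma> u v else 0) else 0)"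
  unfolding sc_mult_def tw_def by (auto intro!: sum.cong)

lemma sum_delta_cond:
  assumes "a \<in> B" "finite B"
  shows "(\<Sum>t\<in>B. if P t then (if a = t then f t else 0) else 0)
       = (if P a then f a else (0 :: 'k::comm_monoid_add))"
proof -
  have "(\<Sum>t\<in>B. if P t then (if a = t then f t else 0) else 0)
      = (\<Sum>t\<in>B. if a = t then (if P t then f t else 0) else 0)"
    by (intro sum.cong) auto
  also have "\<dots> = (if P a then f a else 0)" using assms by (simp add: sum.delta')
  finally show ?thesis .
qed

lemma sum_rotate3:
  "(\<Sum>t\<in>B. \<Sum>v\<in>B. \<Sum>w\<in>B. F t v w) = (\<Sum>v\<in>B. \<Sum>w\<in>B. \<Sum>t\<in>B. (F t v w :: 'k::comm_monoid_add))"
  by (subst sum.swap) (rule sum.cong[OF refl], rule sum.swap)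

lemma sum_rotate4:
  "(\<Sum>t\<in>B. \<Sum>w\<in>B. \<Sum>u\<in>B. \<Sum>v\<in>B. F t w u v)
   = (\<Sum>u\<in>B. \<Sum>v\<in>B. \<Sum>w\<in>B. \<Sum>t\<in>B. (F t w u v :: 'k::comm_monoid_add))"
proof -
  have "(\<Sum>t\<in>B. \<Sum>w\<in>B. \<Sum>u\<in>B. \<Sum>v\<in>B. F t w u v) = (\<Sum>w\<in>B. \<Sum>u\<in>B. \<Sum>v\<in>B. \<Sum>t\<in>B. F t w u v)"
    by (subst sum_rotate3) (intro sum.cong refl sum.swap)
  also have "\<dots> = (\<Sum>u\<in>B. \<Sum>v\<in>B. \<Sum>w\<in>B. \<Sum>t\<in>B. F t w u v)"
    by (subst sum_rotate3) simp
  finally show ?thesis .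
qed

lemma if_zero_mult: "(if Q then a else 0) * c = (if Q then a * c else (0::'a::mult_zero))"
  and mult_if_zero: "c * (if Q then a else 0) = (if Q then c * a else (0::'a::mult_zero))"
  by auto

lemma tw_triple_left:
  fixes \<gamma> :: "'b \<Rightarrow> 'b \<Rightarrow> 'k::comm_ring_1"
  assumes fin: "finite B" and closed: "\<And>u v. u \<in> B \<Longrightarrow> v \<in> B \<Longrightarrow> op u v \<in> B" and m: "m \<in> B"
  shows "sc_mult B (tw op \<gamma>) (sc_mult B (tw op \<gamma>) x y) z m =
    (\<Sum>u\<in>B. \<Sum>v\<in>B. \<Sum>w\<in>B. if op (op u v) w = m
       then x u * y v * z w * (\<gamma> u v * \<gamma> (op u v) w) else 0)"
proof -
  have "sc_mult B (tw op \<gamma>) (sc_mult B (tw op \<gamma>) x y) z m =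
     (\<Sum>t\<in>B. \<Sum>w\<in>B. if op t w = m
        then (\<Sum>u\<in>B. \<Sum>v\<in>B. if op u v = t then x u * y v * \<gamma> u v else 0) * z w * \<gamma> t w else 0)"
    using m by (simp add: sc_mult_tw cong: if_cong)
  also have "\<dots> = (\<Sum>t\<in>B. \<Sum>w\<in>B. \<Sum>u\<in>B. \<Sum>v\<in>B. if op t w = m then
      (if op u v = t then x u * y v * z w * (\<gamma> u v * \<gamma> t w) else 0) else 0)"
    by (intro sum.cong refl)
       (simp add: sum_distrib_right sum_distrib_left if_zero_mult mult_if_zero mult_ac cong: if_cong)
  also have "\<dots> = (\<Sum>u\<in>B. \<Sum>v\<in>B. \<Sum>w\<in>B. \<Sum>t\<in>B. if op t w = m then
      (if op u v = t then x u * y v * z w * (\<gamma> u v * \<gamma> t w) else 0) else 0)"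
    by (rule sum_rotate4)
  also have "\<dots> = (\<Sum>u\<in>B. \<Sum>v\<in>B. \<Sum>w\<in>B. if op (op u v) w = m
      then x u * y v * z w * (\<gamma> u v * \<gamma> (op u v) w) else 0)"
    by (intro sum.cong refl, subst sum_delta_cond) (auto intro: closed fin)
  finally show ?thesis .
qed

lemma tw_triple_right:
  fixes \<gamma> :: "'b \<Rightarrow> 'b \<Rightarrow> 'k::comm_ring_1"
  assumes fin: "finite B" and closed: "\<And>u v. u \<in> B \<Longrightarrow> v \<in> B \<Longrightarrow> op u v \<in> B" and m: "m \<in> B"
  shows "sc_mult B (tw op \<gamma>) x (sc_mult B (tw op \<gamma>) y z) m =
    (\<Sum>u\<in>B. \<Sum>v\<in>B. \<Sum>w\<in>B. if op u (op v w) = m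
       then x u * y v * z w * (\<gamma> v w * \<gamma> u (op v w)) else 0)"
proof -
  have "sc_mult B (tw op \<gamma>) x (sc_mult B (tw op \<gamma>) y z) m =
     (\<Sum>u\<in>B. \<Sum>t\<in>B. if op u t = m
        then x u * (\<Sum>v\<in>B. \<Sum>w\<in>B. if op v w = t then y v * z w * \<gamma> v w else 0) * \<gamma> u t else 0)"
    using m by (simp add: sc_mult_tw cong: if_cong)
  also have "\<dots> = (\<Sum>u\<in>B. \<Sum>t\<in>B. \<Sum>v\<in>B. \<Sum>w\<in>B. if op u t = m then
      (if op v w = t then x u * y v * z w * (\<gamma> v w * \<gamma> u t) else 0) else 0)"
    by (intro sum.cong refl)
       (simp add: sum_distrib_right sum_distrib_left if_zero_mult mult_if_zero mult_ac cong: if_cong)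
  also have "\<dots> = (\<Sum>u\<in>B. \<Sum>v\<in>B. \<Sum>w\<in>B. \<Sum>t\<in>B. if op u t = m then
      (if op v w = t then x u * y v * z w * (\<gamma> v w * \<gamma> u t) else 0) else 0)"
    by (rule sum.cong[OF refl], rule sum_rotate3)
  also have "\<dots> = (\<Sum>u\<in>B. \<Sum>v\<in>B. \<Sum>w\<in>B. if op u (op v w) = m
      then x u * y v * z w * (\<gamma> v w * \<gamma> u (op v w)) else 0)"
    by (intro sum.cong refl, subst sum_delta_cond) (auto intro: closed fin)
  finally show ?thesis .
qed

lemma tw_assoc:
  fixes \<gamma> :: "'b \<Rightarrow> 'b \<Rightarrow> 'k::comm_ring_1"
  assumes fin: "finite B" and closed: "\<And>u v. u \<in> B \<Longrightarrow> v \<in> B \<Longrightarrow> op u v \<in> B"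
    and assoc: "\<And>u v w. u \<in> B \<Longrightarrow> v \<in> B \<Longrightarrow> w \<in> B \<Longrightarrow> op (op u v) w = op u (op v w)"
    and cocycle: "\<And>u v w. u \<in> B \<Longrightarrow> v \<in> B \<Longrightarrow> w \<in> B \<Longrightarrow>
                 \<gamma> u v * \<gamma> (op u v) w = \<gamma> v w * \<gamma> u (op v w)"
  shows "sc_mult B (tw op \<gamma>) (sc_mult B (tw op \<gamma>) x y) z
       = sc_mult B (tw op \<gamma>) x (sc_mult B (tw op \<gamma>) y z)"
proof (rule ext)
  fix m
  show "sc_mult B (tw op \<gamma>) (sc_mult B (tw op \<gamma>) x y) z m
      = sc_mult B (tw op \<gamma>) x (sc_mult B (tw op \<gamma>) y z) m"
  proof (cases "m \<in> B")
    case True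
    have "sc_mult B (tw op \<gamma>) (sc_mult B (tw op \<gamma>) x y) z m =
      (\<Sum>u\<in>B. \<Sum>v\<in>B. \<Sum>w\<in>B. if op (op u v) w = m
         then x u * y v * z w * (\<gamma> u v * \<gamma> (op u v) w) else 0)"
      by (rule tw_triple_left) (use closed fin True in auto)
    also have "\<dots> = (\<Sum>u\<in>B. \<Sum>v\<in>B. \<Sum>w\<in>B. if op u (op v w) = m
         then x u * y v * z w * (\<gamma> v w * \<gamma> u (op v w)) else 0)"
      by (intro sum.cong refl) (simp add: assoc cocycle)
    also have "\<dots> = sc_mult B (tw op \<gamma>) x (sc_mult B (tw op \<gamma>) y z) m"
      by (rule tw_triple_right[symmetric]) (use closed fin True in auto)
    finally show ?thesis .
  qed (simp add: sc_mult_tw)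
qed

lemma tw_mult_basis_right:
  assumes fin: "finite B" and a: "a \<in> B" and w: "w \<in> B" and opc: "op w a \<in> B"
    and cancel: "\<And>u. u \<in> B \<Longrightarrow> op u a = op w a \<Longrightarrow> u = w"
  shows "sc_mult B (tw op \<gamma>) z (\<lambda>i. if i = a then 1 else 0) (op w a) = z w * \<gamma> w a"
proof -
  have "sc_mult B (tw op \<gamma>) z (\<lambda>i. if i = a then 1 else 0) (op w a) =
     (\<Sum>u\<in>B. \<Sum>v\<in>B. if op u v = op w a then z u * (if v = a then 1 else 0) * \<gamma> u v else 0)"
    using opc by (simp add: sc_mult_tw)
  also have "\<dots> = (\<Sum>u\<in>B. \<Sum>v\<in>B. if a = v then (if w = u then z u * \<gamma> u v else 0) else 0)"
    by (intro sum.cong refl) (auto dest: cancel)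
  also have "\<dots> = z w * \<gamma> w a" using a w fin by (simp add: sum.delta')
  finally show ?thesis .
qed

lemma tw_mult_basis_left:
  assumes fin: "finite B" and a: "a \<in> B" and w: "w \<in> B" and opc: "op a w \<in> B"
    and cancel: "\<And>u. u \<in> B \<Longrightarrow> op a u = op a w \<Longrightarrow> u = w"
  shows "sc_mult B (tw op \<gamma>) (\<lambda>i. if i = a then 1 else 0) z (op a w) = \<gamma> a w * z w"
proof -
  have "sc_mult B (tw op \<gamma>) (\<lambda>i. if i = a then 1 else 0) z (op a w) =
     (\<Sum>u\<in>B. \<Sum>v\<in>B. if op u v = op a w then (if u = a then 1 else 0) * z v * \<gamma> u v else 0)"
    using opc by (simp add: sc_mult_tw)
  also have "\<dots> = (\<Sum>u\<in>B. if a = u then (\<Sum>v\<in>B. if w = v then \<gamma> u v * z v else 0) else 0)"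
    by (intro sum.cong refl)
       (auto dest: cancel intro!: sum.cong simp: mult.commute cong: if_cong)
  also have "\<dots> = \<gamma> a w * z w" using a w fin by (simp add: sum.delta')
  finally show ?thesis .
qed

lemma cocycle_at_identity:
  fixes \<gamma> :: "'b \<Rightarrow> 'b \<Rightarrow> 'k::field"
  assumes e1: "e1 \<in> B" and m: "m \<in> B"
    and lid: "\<And>v. v \<in> B \<Longrightarrow> op e1 v = v" and rid: "\<And>v. v \<in> B \<Longrightarrow> op v e1 = v"
    and nz: "\<And>u v. u \<in> B \<Longrightarrow> v \<in> B \<Longrightarrow> \<gamma> u v \<noteq> 0"
    and cocycle: "\<And>u v w. u \<in> B \<Longrightarrow> v \<in> B \<Longrightarrow> w \<in> B \<Longrightarrow>
                 \<gamma> u v * \<gamma> (op u v) w = \<gamma> v w * \<gamma> u (op v w)"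
  shows "\<gamma> e1 m = \<gamma> e1 e1" "\<gamma> m e1 = \<gamma> e1 e1"
  using cocycle[OF e1 e1 m] nz[OF e1 m] cocycle[OF m e1 e1] nz[OF m e1]
  by (simp_all add: lid rid m e1 mult_cancel_right mult_cancel_left)

lemma tw_unit:
  fixes \<gamma> :: "'b \<Rightarrow> 'b \<Rightarrow> 'k::field"
  assumes fin: "finite B"
    and e1: "e1 \<in> B" and lid: "\<And>v. v \<in> B \<Longrightarrow> op e1 v = v" and rid: "\<And>v. v \<in> B \<Longrightarrow> op v e1 = v"
    and nz: "\<And>u v. u \<in> B \<Longrightarrow> v \<in> B \<Longrightarrow> \<gamma> u v \<noteq> 0"
    and cocycle: "\<And>u v w. u \<in> B \<Longrightarrow> v \<in> B \<Longrightarrow> w \<in> B \<Longrightarrow>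
                 \<gamma> u v * \<gamma> (op u v) w = \<gamma> v w * \<gamma> u (op v w)"
  shows "sc_unit B (tw op \<gamma>) (\<lambda>i. if i = e1 then inverse (\<gamma> e1 e1) else 0)"
proof -
  define \<delta> where "\<delta> = (\<lambda>i. if i = e1 then (1::'k) else 0)"
  have e: "(\<lambda>i. if i = e1 then inverse (\<gamma> e1 e1) else 0) = sc_scale (inverse (\<gamma> e1 e1)) \<delta>"
    by (auto simp: sc_scale_def \<delta>_def)
  have basis: "sc_mult B (tw op \<gamma>) \<delta> x m = \<gamma> e1 e1 * x m"
    "sc_mult B (tw op \<gamma>) x \<delta> m = \<gamma> e1 e1 * x m" if m: "m \<in> B" for x m
  proof -
    have "sc_mult B (tw op \<gamma>) \<delta> x (op e1 m) = \<gamma> e1 m * x m"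
      unfolding \<delta>_def by (rule tw_mult_basis_left[OF fin e1 m]) (simp_all add: lid m)
    moreover have "sc_mult B (tw op \<gamma>) x \<delta> (op m e1) = x m * \<gamma> m e1"
      unfolding \<delta>_def by (rule tw_mult_basis_right[OF fin e1 m]) (simp_all add: rid m)
    ultimately show "sc_mult B (tw op \<gamma>) \<delta> x m = \<gamma> e1 e1 * x m"
      "sc_mult B (tw op \<gamma>) x \<delta> m = \<gamma> e1 e1 * x m"
      using cocycle_at_identity[OF e1 m lid rid nz cocycle] lid[OF m] rid[OF m] by simp_all
  qed
  have "sc_mult B (tw op \<gamma>) (sc_scale (inverse (\<gamma> e1 e1)) \<delta>) x m = x m \<and>
        sc_mult B (tw op \<gamma>) x (sc_scale (inverse (\<gamma> e1 e1)) \<delta>) m = x m"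
    if x: "x \<in> sc_carrier B" for x m
  proof (cases "m \<in> B")
    case True
    thus ?thesis using basis[OF True, of x] nz[OF e1 e1]
      unfolding sc_mult_scale_left sc_mult_scale_right by (simp add: sc_scale_def)
  next
    case False
    thus ?thesis using x sc_mult_in[of B "tw op \<gamma>"] by (simp add: sc_carrier_def)
  qed
  thus ?thesis
    unfolding sc_unit_def e using e1 by (auto simp: sc_carrier_def sc_scale_def \<delta>_def)
qed

section \<open>Laurent extensions of a domain\<close>

lemma fls_mult_nth_below_weight:
  fixes f g :: "'a::field fls" and n :: int
  assumes f: "\<And>e. n * e + j < A \<Longrightarrow> f $$ e = 0"
    and g: "\<And>e. n * e + b < A' \<Longrightarrow> g $$ e = 0"
    and E: "n * E + j + b < A + A'"
  shows "(f * g) $$ E = 0"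
proof -
  have "(f * g) $$ E = (\<Sum>i = fls_subdegree f..E - fls_subdegree g. f $$ i * g $$ (E - i))"
    by (rule fls_times_nth(2))
  also have "\<dots> = 0"
  proof (rule sum.neutral, rule ballI)
    fix i
    show "f $$ i * g $$ (E - i) = 0"
    proof (cases "n * i + j < A")
      case False
      have "n * (E - i) = n * E - n * i" by (simp add: right_diff_distrib)
      hence "n * (E - i) + b < A'" using False E by linarith
      thus ?thesis using g by simp
    qed (use f in simp)
  qed
  finally show ?thesis .
qed

lemma fls_mult_nth_at_bounds:
  fixes f g :: "'a::field fls"
  assumes f: "\<And>e. e < d1 \<Longrightarrow> f $$ e = 0" and g: "\<And>e. e < d2 \<Longrightarrow> g $$ e = 0"
  shows "(f * g) $$ (d1 + d2) = f $$ d1 * g $$ d2"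
proof (cases "f = 0 \<or> g = 0")
  case False
  hence "d1 \<le> fls_subdegree f" "d2 \<le> fls_subdegree g"
    using fls_subdegree_geI f g by auto
  moreover have "(f * g) $$ (d1 + d2) = 0" "f $$ d1 = 0 \<or> g $$ d2 = 0"
    if "d1 < fls_subdegree f \<or> d2 < fls_subdegree g"
    using that calculation by (auto intro: fls_times_nth_eq0 fls_eq0_below_subdegree)
  ultimately show ?thesis
    using fls_times_base[of f g] by (cases "d1 < fls_subdegree f \<or> d2 < fls_subdegree g") auto
qed auto

lemma fls_mult_X_if_nth:
  fixes f :: "'a::field fls"
  shows "(f * (if c then fls_X else 1)) $$ E = f $$ (E - (if c then 1 else 0))"
  by (cases c) (simp_all add: fls_X_times_conv_shift)

text \<open>Vectors x over K((X)) with basis B \<times> {0..<n} are thought of as sums of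
  x(u,j) \<cdot> u \<cdot> x^j with x^n = X; the coefficient of X^e in coordinate (u,j) then has
  weight n e + j.  weighted_order_ge n B x N says that all coefficients of weight < N
  vanish.\<close>
definition weighted_order_ge :: "nat \<Rightarrow> 'b set \<Rightarrow> ('b \<times> nat \<Rightarrow> 'a::zero fls) \<Rightarrow> int \<Rightarrow> bool" where
  "weighted_order_ge n B x N \<longleftrightarrow> (\<forall>u\<in>B. \<forall>j<n. \<forall>e. int n * e + int j < N \<longrightarrow> x (u, j) $$ e = 0)"

lemma weight_determines_column:
  assumes "j < n" "j' < n" "int n * e + int j = int n * e' + int j'"
  shows "j = j'"
proof -
  have "(int n * e + int j) mod int n = int j" "(int n * e' + int j') mod int n = int j'"
    using assms(1,2) by simp_all
  thus ?thesis using assms(3) by simp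
qed

lemma weighted_order_off_column:
  assumes "weighted_order_ge n B x (int n * d + int j0)" "j0 < n"
    and "u \<in> B" "j < n" "j \<noteq> j0" "int n * e + int j \<le> int n * d + int j0"
  shows "x (u, j) $$ e = 0"
  using assms weight_determines_column[of j n j0 e d] unfolding weighted_order_ge_def
  by (cases "int n * e + int j < int n * d + int j0") auto

lemma weighted_order_column:
  assumes "weighted_order_ge n B x (int n * d + int j0)" "0 < n" "u \<in> B" "j0 < n" "e < d"
  shows "x (u, j0) $$ e = 0"
  using assms unfolding weighted_order_ge_def by (simp add: mult_less_cancel_left_pos)

lemma leading_coefficient:
  fixes x :: "'b \<times> nat \<Rightarrow> 'a::field fls"
  assumes n: "0 < n" and fin: "finite B"
    and x: "x \<in> sc_carrier (B \<times> {0..<n})" "x \<noteq> (\<lambda>_. 0)"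
  obtains j0 d0 where "j0 < n" "weighted_order_ge n B x (int n * d0 + int j0)"
    "\<exists>u\<in>B. x (u, j0) $$ d0 \<noteq> 0"
proof -
  define S where "S = {p \<in> B \<times> {0..<n}. x p \<noteq> 0}"
  define weight where "weight p = int n * fls_subdegree (x p) + int (snd p)" for p
  obtain p0 where "x p0 \<noteq> 0" using x(2) by (metis ext)
  hence "p0 \<in> S" using x(1) unfolding S_def sc_carrier_def by (cases p0) auto
  moreover have "finite S" using fin by (simp add: S_def)
  ultimately obtain q where "is_arg_min weight (\<lambda>p. p \<in> S) q"
    using ex_is_arg_min_if_finite[of S weight] by blast
  hence q: "q \<in> S" "\<And>p. p \<in> S \<Longrightarrow> weight q \<le> weight p"
    by (auto simp: is_arg_min_linorder)
  obtain u0 j0 where q_def: "q = (u0, j0)" by (cases q)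
  have u0: "u0 \<in> B" "j0 < n" "x (u0, j0) \<noteq> 0" using q(1) by (auto simp: S_def q_def)
  have "weighted_order_ge n B x (int n * fls_subdegree (x (u0, j0)) + int j0)"
    unfolding weighted_order_ge_def
  proof (intro ballI allI impI)
    fix u j e assume u: "u \<in> B" and j: "j < n"
      and e: "int n * e + int j < int n * fls_subdegree (x (u0, j0)) + int j0"
    show "x (u, j) $$ e = 0"
    proof (cases "x (u, j) = 0")
      case False
      hence "weight q \<le> weight (u, j)" using q(2) u j by (auto simp: S_def)
      hence "int n * e < int n * fls_subdegree (x (u, j))"
        using e by (simp add: weight_def q_def)
      hence "e < fls_subdegree (x (u, j))" using n by (simp add: mult_less_cancel_left_pos)
      thus ?thesis by (rule fls_eq0_below_subdegree)
    qed simp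
  qed
  thus ?thesis using that u0 by (meson nth_fls_subdegree_nonzero)
qed

text \<open>The Laurent extension of a twisted algebra K^gamma B: basis B \<times> {0..<n} over K((X)),
  u x^j \<cdot> v x^b = gamma(u,v) chi(v)^j \<cdot> (uv) x^(j+b), where x^n = X.  For the domain
  property only chi(v) \<noteq> 0 matters.\<close>
definition lift_op :: "('b \<Rightarrow> 'b \<Rightarrow> 'b) \<Rightarrow> nat \<Rightarrow> 'b \<times> nat \<Rightarrow> 'b \<times> nat \<Rightarrow> 'b \<times> nat" where
  "lift_op op n p q = (op (fst p) (fst q), (snd p + snd q) mod n)"

definition lift_coc :: "nat \<Rightarrow> ('b \<Rightarrow> 'b \<Rightarrow> 'a::field) \<Rightarrow> ('b \<Rightarrow> 'a)
    \<Rightarrow> 'b \<times> nat \<Rightarrow> 'b \<times> nat \<Rightarrow> 'a fls" where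
  "lift_coc n \<gamma> \<chi> p q = fls_const (\<gamma> (fst p) (fst q) * \<chi> (fst q) ^ snd p)
     * (if n \<le> snd p + snd q then fls_X else 1)"

lemma carry_int:
  assumes "j < n" "b < n"
  shows "int j + int b = int ((j + b) mod n) + int n * (if n \<le> j + b then 1 else 0)"
  using assms by (auto simp: le_mod_geq)

lemma lift_term_at_leading_position:
  fixes x y :: "'b \<times> nat \<Rightarrow> 'a::field fls"
  assumes n: "0 < n" and j: "j < n" and b: "b < n" and jx: "jx < n" and jy: "jy < n"
    and u: "u \<in> B" and v: "v \<in> B"
    and ox: "weighted_order_ge n B x (int n * dx + int jx)"
    and oy: "weighted_order_ge n B y (int n * dy + int jy)"
    and col: "(j + b) mod n = (jx + jy) mod n"
  shows "(x (u, j) * y (v, b) * lift_coc n \<gamma> \<chi> (u, j) (v, b)) $$ (dx + dy + (if n \<le> jx + jy then 1 else 0))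
       = (if j = jx \<and> b = jy then x (u, jx) $$ dx * (y (v, jy) $$ dy * \<chi> v ^ jx) * \<gamma> u v else 0)"
proof -
  define c where "c = (n \<le> j + b)"
  define E where "E = dx + dy + (if n \<le> jx + jy then 1 else 0) - (if c then 1 else 0)"
  have "(x (u, j) * y (v, b) * lift_coc n \<gamma> \<chi> (u, j) (v, b)) $$ (dx + dy + (if n \<le> jx + jy then 1 else 0))
      = \<gamma> u v * \<chi> v ^ j * (x (u, j) * y (v, b)) $$ E"
    by (simp add: lift_coc_def c_def E_def fls_mult_X_if_nth mult.assoc[symmetric]
        mult.commute[of "x _" "fls_const _"] mult.left_commute[of "y _" "fls_const _"] fls_mult_const_nth)
  moreover have weight: "int n * E + int j + int b = (int n * dx + int jx) + (int n * dy + int jy)"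
    using carry_int[OF j b] carry_int[OF jx jy] col by (simp add: E_def c_def algebra_simps)
  moreover have "(x (u, j) * y (v, b)) $$ E = x (u, jx) $$ dx * y (v, jy) $$ dy"
    if "j = jx" "b = jy"
  proof -
    have "E = dx + dy" using that by (simp add: E_def c_def)
    thus ?thesis using that fls_mult_nth_at_bounds[OF weighted_order_column[OF ox n u jx]
        weighted_order_column[OF oy n v jy]] by simp
  qed
  moreover have "(x (u, j) * y (v, b)) $$ E = 0" if "j \<noteq> jx \<or> b \<noteq> jy"
  proof (cases "j = jx")
    case False
    show ?thesis
      by (rule fls_mult_nth_below_weight[where n = "int n" and j = "int j"
            and A = "int n * dx + int jx + 1" and b = "int b" and A' = "int n * dy + int jy"])
         (use weighted_order_off_column[OF ox jx u j False] oy v b weight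
           in \<open>auto simp: weighted_order_ge_def\<close>)
  next
    case True
    hence "b \<noteq> jy" using that by simp
    show ?thesis
      by (rule fls_mult_nth_below_weight[where n = "int n" and j = "int j"
            and A = "int n * dx + int jx" and b = "int b" and A' = "int n * dy + int jy + 1"])
         (use weighted_order_off_column[OF oy jy v b \<open>b \<noteq> jy\<close>] ox u j weight
           in \<open>auto simp: weighted_order_ge_def\<close>)
  qed
  ultimately show ?thesis by (auto simp: mult_ac)
qed

lemma sum_prod_delta:
  assumes "finite B" "finite J" "a \<in> J"
  shows "(\<Sum>p\<in>B \<times> J. if snd p = a then f (fst p) else 0) = (\<Sum>u\<in>B. f u :: 'k::comm_monoid_add)"
proof -
  have "(\<Sum>p\<in>B \<times> J. if snd p = a then f (fst p) else 0) = (\<Sum>u\<in>B. \<Sum>j\<in>J. if j = a then f u else 0)"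
    by (simp add: sum.cartesian_product split_def)
  thus ?thesis using assms by (simp add: sum.delta)
qed

lemma lift_mult_at_leading_position:
  fixes x y :: "'b \<times> nat \<Rightarrow> 'a::field fls"
  assumes n: "0 < n" and fin: "finite B" and w: "w \<in> B" and jx: "jx < n" and jy: "jy < n"
    and ox: "weighted_order_ge n B x (int n * dx + int jx)"
    and oy: "weighted_order_ge n B y (int n * dy + int jy)"
  shows "sc_mult (B \<times> {0..<n}) (tw (lift_op op n) (lift_coc n \<gamma> \<chi>)) x y (w, (jx + jy) mod n)
           $$ (dx + dy + (if n \<le> jx + jy then 1 else 0))
       = sc_mult B (tw op \<gamma>) (\<lambda>u. if u \<in> B then x (u, jx) $$ dx else 0)
           (\<lambda>v. if v \<in> B then y (v, jy) $$ dy * \<chi> v ^ jx else 0) w"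
    (is "_ $$ ?D = sc_mult B _ ?lx ?ly w")
proof -
  let ?B' = "B \<times> {0..<n}" and ?jz = "(jx + jy) mod n"
  have leading_term: "(if lift_op op n p q = (w, ?jz) then (x p * y q * lift_coc n \<gamma> \<chi> p q) $$ ?D else 0)
      = (if snd p = jx then (if snd q = jy then (if op (fst p) (fst q) = w
           then ?lx (fst p) * ?ly (fst q) * \<gamma> (fst p) (fst q) else 0) else 0) else 0)"
    if "p \<in> ?B'" "q \<in> ?B'" for p q
    using that lift_term_at_leading_position[OF n _ _ jx jy _ _ ox oy, of "snd p" "snd q" "fst p" "fst q"]
    by (cases p, cases q) (auto simp: lift_op_def)
  have "sc_mult ?B' (tw (lift_op op n) (lift_coc n \<gamma> \<chi>)) x y (w, ?jz) $$ ?D =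
      (\<Sum>p\<in>?B'. \<Sum>q\<in>?B'. if lift_op op n p q = (w, ?jz)
         then (x p * y q * lift_coc n \<gamma> \<chi> p q) $$ ?D else 0)"
    using w n by (simp add: sc_mult_tw fls_nth_sum if_distrib[where f = "\<lambda>f. f $$ ?D"] cong: if_cong)
  also have "\<dots> = (\<Sum>p\<in>?B'. if snd p = jx then (\<Sum>q\<in>?B'. if snd q = jy then
      (if op (fst p) (fst q) = w then ?lx (fst p) * ?ly (fst q) * \<gamma> (fst p) (fst q) else 0) else 0) else 0)"
    by (auto simp: leading_term intro!: sum.cong)
  also have "\<dots> = (\<Sum>u\<in>B. \<Sum>q\<in>?B'. if snd q = jy then
      (if op u (fst q) = w then ?lx u * ?ly (fst q) * \<gamma> u (fst q) else 0) else 0)"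
    by (rule sum_prod_delta) (use fin jx in auto)
  also have "\<dots> = (\<Sum>u\<in>B. \<Sum>v\<in>B. if op u v = w then ?lx u * ?ly v * \<gamma> u v else 0)"
    by (intro sum.cong refl sum_prod_delta) (use fin jy in auto)
  also have "\<dots> = sc_mult B (tw op \<gamma>) ?lx ?ly w" using w by (simp add: sc_mult_tw)
  finally show ?thesis .
qed

text \<open>Laurent extension preserves domains: the coefficient of a product at the sum of the
  two leading positions is a product of two nonzero elements of the domain K^gamma B.\<close>
lemma lift_domain:
  fixes \<gamma> :: "'b \<Rightarrow> 'b \<Rightarrow> 'a::field" and \<chi> :: "'b \<Rightarrow> 'a"
  assumes n: "0 < n" and fin: "finite B"
    and chi: "\<And>v. v \<in> B \<Longrightarrow> \<chi> v \<noteq> 0"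
    and dom: "sc_domain B (tw op \<gamma>)"
  shows "sc_domain (B \<times> {0..<n}) (tw (lift_op op n) (lift_coc n \<gamma> \<chi>))"
  unfolding sc_domain_def
proof (intro ballI impI)
  fix x y :: "'b \<times> nat \<Rightarrow> 'a fls"
  assume x: "x \<in> sc_carrier (B \<times> {0..<n})" and y: "y \<in> sc_carrier (B \<times> {0..<n})"
    and x0: "x \<noteq> (\<lambda>_. 0)" and y0: "y \<noteq> (\<lambda>_. 0)"
  obtain jx dx where jx: "jx < n" and ox: "weighted_order_ge n B x (int n * dx + int jx)"
    and lead_x: "\<exists>u\<in>B. x (u, jx) $$ dx \<noteq> 0"
    using leading_coefficient[OF n fin x x0] by blast
  obtain jy dy where jy: "jy < n" and oy: "weighted_order_ge n B y (int n * dy + int jy)"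
    and lead_y: "\<exists>u\<in>B. y (u, jy) $$ dy \<noteq> 0"
    using leading_coefficient[OF n fin y y0] by blast
  define lx where "lx u = (if u \<in> B then x (u, jx) $$ dx else 0)" for u
  define ly where "ly v = (if v \<in> B then y (v, jy) $$ dy * \<chi> v ^ jx else 0)" for v
  have "lx \<in> sc_carrier B" "lx \<noteq> (\<lambda>_. 0)" "ly \<in> sc_carrier B" "ly \<noteq> (\<lambda>_. 0)"
    using lead_x lead_y chi by (auto simp: lx_def ly_def sc_carrier_def fun_eq_iff)
  hence "sc_mult B (tw op \<gamma>) lx ly \<noteq> (\<lambda>_. 0)" using dom unfolding sc_domain_def by blast
  then obtain w where w0: "sc_mult B (tw op \<gamma>) lx ly w \<noteq> 0" by (metis ext)
  hence w: "w \<in> B" by (auto simp: sc_mult_tw split: if_splits)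
  show "sc_mult (B \<times> {0..<n}) (tw (lift_op op n) (lift_coc n \<gamma> \<chi>)) x y \<noteq> (\<lambda>_. 0)"
    using lift_mult_at_leading_position[OF n fin w jx jy ox oy, of op \<gamma> \<chi>] w0
    unfolding lx_def[abs_def] ly_def[abs_def] by auto
qed

lemma emb_KK_0 [simp]: "emb_KK 0 = 0"
  by (simp add: emb_KK_def)

lemma emb_KK_mult: "emb_KK (a * b) = emb_KK a * emb_KK b"
  by (simp add: emb_KK_def)

lemma emb_KK_power: "emb_KK (a ^ k) = emb_KK a ^ k"
  by (simp add: emb_KK_def fls_const_power)

lemma emb_KK_eq_iff [simp]: "emb_KK a = emb_KK b \<longleftrightarrow> a = b"
  by (metis emb_KK_def fls_const_nth)

lemma emb_KK_eq_0_iff [simp]: "emb_KK a = 0 \<longleftrightarrow> a = 0"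
  and emb_KK_eq_1_iff [simp]: "emb_KK a = 1 \<longleftrightarrow> a = 1"
  using emb_KK_eq_iff[of a 0] emb_KK_eq_iff[of a 1] by (simp_all add: emb_KK_def)

lemma var_s_nz: "(var_s :: 'a::field fls fls) \<noteq> 0"
  and var_t_nz: "(var_t :: 'a::field fls fls) \<noteq> 0"
  by (simp_all add: var_s_def var_t_def)

lemma nth_mult_emb_KK: "((f * emb_KK c) $$ b) $$ a = (f $$ b) $$ a * c"
  by (simp add: emb_KK_def fls_mult_const_nth)

lemma power_mod_order: "z ^ n = (1::'a::monoid_mult) \<Longrightarrow> z ^ k = z ^ (k mod n)"
  by (metis mult_div_mod_eq power_add power_mult power_one mult_1)

text \<open>The carry factors of x^i x^a x^c agree for both bracketings (x^n = s).\<close>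
lemma carry_factor_assoc:
  fixes s :: "'a::comm_monoid_mult" and n :: nat
  assumes "i < n" "a < n" "c < n"
  shows "(if n \<le> i + a then s else 1) * (if n \<le> (i + a) mod n + c then s else 1) =
         (if n \<le> a + c then s else 1) * (if n \<le> i + (a + c) mod n then s else 1)"
proof -
  have "(i + a) mod n = (if n \<le> i + a then i + a - n else i + a)"
    "(a + c) mod n = (if n \<le> a + c then a + c - n else a + c)"
    using assms by (auto simp: le_mod_geq)
  thus ?thesis using assms by auto
qed

text \<open>The exponents of zeta produced by y^j x^a = zeta^(-ja) x^a y^j agree for both
  bracketings modulo n.\<close>
lemma commutation_exponent_assoc:
  "(j * a + ((j + b) mod n) * c) mod n = (b * c + j * ((a + c) mod n)) mod (n::nat)"
proof -
  have "(j * a + ((j + b) mod n) * c) mod n = (j * a + (j + b) * c) mod n"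
    by (metis mod_add_right_eq mod_mult_left_eq)
  also have "j * a + (j + b) * c = b * c + j * (a + c)" by (simp add: algebra_simps)
  also have "(b * c + j * (a + c)) mod n = (b * c + j * ((a + c) mod n)) mod n"
    by (metis mod_add_right_eq mod_mult_right_eq)
  finally show ?thesis .
qed

section \<open>The algebra D = (K^beta G0 \<otimes> k) \<otimes> (s,t)_n as a twisted algebra\<close>

locale symbol_extension =
  fixes G0 :: "('g, 'x) monoid_scheme" and n :: nat and \<zeta> :: "'a::field" and \<beta> :: "'g \<Rightarrow> 'g \<Rightarrow> 'a"
  assumes grp: "group G0" and finG: "finite (carrier G0)" and n2: "2 \<le> n"
    and zeta_order: "\<zeta> ^ n = 1" and zeta_primitive: "\<forall>m. 0 < m \<and> m < n \<longrightarrow> \<zeta> ^ m \<noteq> 1"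
    and cocycle: "cocycle2 G0 \<beta>"
    and central_division: "sc_central_division_algebra (carrier G0) (twisted_sc G0 \<beta>)"
begin

sublocale G: group G0 by (rule grp)

text \<open>Basis of D: u_g x^i y^j for g in G0 and i, j < n, with the product below.\<close>
definition BD :: "('g \<times> nat \<times> nat) set" where
  "BD = carrier G0 \<times> ({0..<n} \<times> {0..<n})"

definition opD :: "'g \<times> nat \<times> nat \<Rightarrow> 'g \<times> nat \<times> nat \<Rightarrow> 'g \<times> nat \<times> nat" where
  "opD = (\<lambda>(g, i, j) (h, a, b). (g \<otimes>\<^bsub>G0\<^esub> h, (i + a) mod n, (j + b) mod n))"

definition zinv :: "'a fls fls" where "zinv = inverse (emb_KK \<zeta>)"

definition \<gamma>D :: "'g \<times> nat \<times> nat \<Rightarrow> 'g \<times> nat \<times> nat \<Rightarrow> 'a fls fls" where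
  "\<gamma>D = (\<lambda>(g, i, j) (h, a, b). emb_KK (\<beta> g h) * (zinv ^ (j * a) * (if n \<le> i + a then var_s else 1)
        * (if n \<le> j + b then var_t else 1)))"

abbreviation MD where "MD \<equiv> sc_mult BD (tw opD \<gamma>D)"

lemma D_structure_constants:
  "sc_tensor (sc_base_change emb_KK (twisted_sc G0 \<beta>)) (symbol_sc n (emb_KK \<zeta>) var_s var_t)
   = tw opD \<gamma>D"
proof (intro ext)
  fix u v w :: "'g \<times> nat \<times> nat"
  show "sc_tensor (sc_base_change emb_KK (twisted_sc G0 \<beta>)) (symbol_sc n (emb_KK \<zeta>) var_s var_t) u v w
      = tw opD \<gamma>D u v w"
    by (cases u, cases v, cases w) (simp add: sc_tensor_def sc_base_change_def twisted_sc_def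
        symbol_sc_def tw_def opD_def \<gamma>D_def zinv_def)
qed

lemma npos: "0 < n" using n2 by simp

lemma zeta_nz: "\<zeta> \<noteq> 0" using zeta_order npos by (metis power_0_left zero_neq_one less_not_refl)

lemma zinv_nz: "zinv \<noteq> 0" using zeta_nz by (simp add: zinv_def)

lemma zinv_order: "zinv ^ n = 1"
  by (simp add: zinv_def power_inverse emb_KK_power[symmetric] zeta_order)

lemma zinv_primitive: "0 < m \<Longrightarrow> m < n \<Longrightarrow> zinv ^ m \<noteq> 1"
  using zeta_primitive by (simp add: zinv_def power_inverse emb_KK_power[symmetric])

lemma beta_nz: "g \<in> carrier G0 \<Longrightarrow> h \<in> carrier G0 \<Longrightarrow> \<beta> g h \<noteq> 0"
  using cocycle by (simp add: cocycle2_def)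

lemma beta_cocycle: "g \<in> carrier G0 \<Longrightarrow> h \<in> carrier G0 \<Longrightarrow> l \<in> carrier G0 \<Longrightarrow>
   \<beta> g h * \<beta> (g \<otimes>\<^bsub>G0\<^esub> h) l = \<beta> h l * \<beta> g (h \<otimes>\<^bsub>G0\<^esub> l)"
  using cocycle by (simp add: cocycle2_def)

lemma twisted_eq: "twisted_sc G0 \<beta> = tw (\<lambda>g h. g \<otimes>\<^bsub>G0\<^esub> h) \<beta>"
  by (simp add: twisted_sc_def tw_def fun_eq_iff)

lemma BD_finite: "finite BD" using finG by (simp add: BD_def)

lemma opD_closed: "u \<in> BD \<Longrightarrow> v \<in> BD \<Longrightarrow> opD u v \<in> BD"
  using npos by (auto simp: BD_def opD_def)

lemma opD_assoc: "u \<in> BD \<Longrightarrow> v \<in> BD \<Longrightarrow> w \<in> BD \<Longrightarrow> opD (opD u v) w = opD u (opD v w)"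
  by (clarsimp simp: BD_def opD_def G.m_assoc mod_add_left_eq mod_add_right_eq add.assoc)

definition oneD where "oneD = (\<one>\<^bsub>G0\<^esub>, 0::nat, 0::nat)"

lemma oneD_in: "oneD \<in> BD" using npos by (simp add: oneD_def BD_def)

lemma oneD_left: "v \<in> BD \<Longrightarrow> opD oneD v = v"
  and oneD_right: "v \<in> BD \<Longrightarrow> opD v oneD = v"
  by (auto simp: BD_def opD_def oneD_def)

lemma add_mod_cancel:
  "a < n \<Longrightarrow> b < n \<Longrightarrow> c < n \<Longrightarrow> (a + c) mod n = (b + c) mod n \<Longrightarrow> a = b"
  "a < n \<Longrightarrow> b < n \<Longrightarrow> c < n \<Longrightarrow> (c + a) mod n = (c + b) mod n \<Longrightarrow> a = b"
  by (cases "n \<le> a + c"; cases "n \<le> b + c"; auto simp: le_mod_geq add.commute)+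

lemma opD_cancel_right: "u \<in> BD \<Longrightarrow> v \<in> BD \<Longrightarrow> w \<in> BD \<Longrightarrow> opD u w = opD v w \<Longrightarrow> u = v"
  by (auto simp: BD_def opD_def dest: add_mod_cancel(1))

lemma opD_cancel_left: "u \<in> BD \<Longrightarrow> v \<in> BD \<Longrightarrow> w \<in> BD \<Longrightarrow> opD w u = opD w v \<Longrightarrow> u = v"
  by (auto simp: BD_def opD_def dest: add_mod_cancel(2))

lemma \<gamma>D_nz: "u \<in> BD \<Longrightarrow> v \<in> BD \<Longrightarrow> \<gamma>D u v \<noteq> 0"
  using zinv_nz var_s_nz var_t_nz by (auto simp: BD_def \<gamma>D_def beta_nz split: if_splits)

text \<open>gamma_D is a 2-cocycle: the cocycle identity splits into that of beta, the
  zeta-exponents and the s- and t-carries.\<close>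
lemma \<gamma>D_cocycle:
  assumes "u \<in> BD" "v \<in> BD" "w \<in> BD"
  shows "\<gamma>D u v * \<gamma>D (opD u v) w = \<gamma>D v w * \<gamma>D u (opD v w)"
proof -
  obtain g i j h a b l c d where uvw: "u = (g, i, j)" "v = (h, a, b)" "w = (l, c, d)"
    by (cases u, cases v, cases w) auto
  have g: "g \<in> carrier G0" "i < n" "j < n" and h: "h \<in> carrier G0" "a < n" "b < n"
    and l: "l \<in> carrier G0" "c < n" "d < n" using assms uvw by (auto simp: BD_def)
  let ?S = "\<lambda>k. if n \<le> k then (var_s :: 'a fls fls) else 1"
  let ?T = "\<lambda>k. if n \<le> k then (var_t :: 'a fls fls) else 1"
  have beta: "emb_KK (\<beta> g h) * emb_KK (\<beta> (g \<otimes>\<^bsub>G0\<^esub> h) l)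
      = emb_KK (\<beta> h l) * emb_KK (\<beta> g (h \<otimes>\<^bsub>G0\<^esub> l))"
    using beta_cocycle[OF g(1) h(1) l(1)] by (simp add: emb_KK_mult[symmetric])
  have zeta: "zinv ^ (j * a) * zinv ^ (((j + b) mod n) * c) = zinv ^ (b * c) * zinv ^ (j * ((a + c) mod n))"
    unfolding power_add[symmetric]
    by (subst (1 2) power_mod_order[OF zinv_order]) (simp add: commutation_exponent_assoc)
  have s: "?S (i + a) * ?S ((i + a) mod n + c) = ?S (a + c) * ?S (i + (a + c) mod n)"
    and t: "?T (j + b) * ?T ((j + b) mod n + d) = ?T (b + d) * ?T (j + (b + d) mod n)"
    using g h l by (simp_all add: carry_factor_assoc)
  have "\<gamma>D u v * \<gamma>D (opD u v) w =
     (emb_KK (\<beta> g h) * emb_KK (\<beta> (g \<otimes>\<^bsub>G0\<^esub> h) l)) * (zinv ^ (j * a) * zinv ^ (((j + b) mod n) * c))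
     * (?S (i + a) * ?S ((i + a) mod n + c)) * (?T (j + b) * ?T ((j + b) mod n + d))"
    unfolding uvw by (simp add: \<gamma>D_def opD_def mult_ac)
  also have "\<dots> = (emb_KK (\<beta> h l) * emb_KK (\<beta> g (h \<otimes>\<^bsub>G0\<^esub> l))) * (zinv ^ (b * c) * zinv ^ (j * ((a + c) mod n)))
     * (?S (a + c) * ?S (i + (a + c) mod n)) * (?T (b + d) * ?T (j + (b + d) mod n))"
    unfolding beta zeta s t ..
  also have "\<dots> = \<gamma>D v w * \<gamma>D u (opD v w)"
    unfolding uvw by (simp add: \<gamma>D_def opD_def mult_ac)
  finally show ?thesis .
qed

lemma D_assoc: "MD (MD x y) z = MD x (MD y z)"
  by (rule tw_assoc[OF BD_finite opD_closed opD_assoc \<gamma>D_cocycle])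

definition eD where "eD = (\<lambda>i. if i = oneD then inverse (\<gamma>D oneD oneD) else 0)"

lemma D_unit: "sc_unit BD (tw opD \<gamma>D) eD"
  unfolding eD_def by (rule tw_unit[OF BD_finite oneD_in oneD_left oneD_right \<gamma>D_nz \<gamma>D_cocycle])

lemma eD_nz: "eD \<noteq> (\<lambda>_. 0)"
proof
  assume "eD = (\<lambda>_. 0)"
  hence "eD oneD = 0" by simp
  thus False using \<gamma>D_nz[OF oneD_in oneD_in] by (simp add: eD_def)
qed

text \<open>D is obtained from K^beta G0 by two Laurent extensions, first adjoining x over K((s))
  (with chi = 1), then y over K((s))((t)) (with chi(g,a) = zeta^-a).  Hence D is a
  domain, and therefore a division algebra.\<close>
lemma \<gamma>D_as_lift:
  "\<gamma>D (g, i, j) (h, a, b) = lift_coc n (lift_coc n \<beta> (\<lambda>_. 1)) (\<lambda>q. fls_const (inverse \<zeta>) ^ snd q)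
     ((g, i), j) ((h, a), b)"
proof -
  have "zinv = fls_const (fls_const (inverse \<zeta>))"
    by (simp add: zinv_def emb_KK_def fls_inverse_const)
  thus ?thesis
    by (simp add: \<gamma>D_def lift_coc_def emb_KK_def var_s_def var_t_def fls_const_power
        fls_const_mult_const[symmetric] power_mult[symmetric] mult.commute mult_ac)
qed

lemma D_domain: "sc_domain BD (tw opD \<gamma>D)"
proof -
  have A_domain: "sc_domain (carrier G0) (tw (\<lambda>g h. g \<otimes>\<^bsub>G0\<^esub> h) \<beta>)"
    using division_algebra_imp_domain central_division
    unfolding sc_central_division_algebra_def twisted_eq by blast
  have lifted: "sc_domain ((carrier G0 \<times> {0..<n}) \<times> {0..<n})
      (tw (lift_op (lift_op (\<lambda>g h. g \<otimes>\<^bsub>G0\<^esub> h) n) n)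
          (lift_coc n (lift_coc n \<beta> (\<lambda>_. 1)) (\<lambda>q. fls_const (inverse \<zeta>) ^ snd q)))"
    using zeta_nz finG
    by (intro lift_domain[OF npos] lift_domain[OF npos _ _ A_domain]) auto
  have "bij_betw (\<lambda>(g, i, j). ((g, i), j)) BD ((carrier G0 \<times> {0..<n}) \<times> {0..<n})"
    by (rule bij_betwI[where g = "\<lambda>((g, i), j). (g, i, j)"]) (auto simp: BD_def)
  thus ?thesis
  proof (rule domain_reindex[OF _ _ lifted])
    fix u v w :: "'g \<times> nat \<times> nat"
    show "tw opD \<gamma>D u v w = tw (lift_op (lift_op (\<lambda>g h. g \<otimes>\<^bsub>G0\<^esub> h) n) n)
        (lift_coc n (lift_coc n \<beta> (\<lambda>_. 1)) (\<lambda>q. fls_const (inverse \<zeta>) ^ snd q))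
        ((\<lambda>(g, i, j). ((g, i), j)) u) ((\<lambda>(g, i, j). ((g, i), j)) v) ((\<lambda>(g, i, j). ((g, i), j)) w)"
      by (cases u, cases v, cases w) (simp add: tw_def opD_def lift_op_def \<gamma>D_as_lift)
  qed
qed

lemma D_division: "x \<in> sc_carrier BD \<Longrightarrow> x \<noteq> (\<lambda>_. 0) \<Longrightarrow>
   \<exists>y\<in>sc_carrier BD. MD x y = eD \<and> MD y x = eD"
  by (rule domain_imp_inverse[OF BD_finite _ D_unit D_domain]) (simp_all add: D_assoc)

end

section \<open>The centre of D\<close>

context symbol_extension
begin

definition xD where "xD = (\<one>\<^bsub>G0\<^esub>, 1::nat, 0::nat)"
definition yD where "yD = (\<one>\<^bsub>G0\<^esub>, 0::nat, 1::nat)"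

lemma xD_in: "xD \<in> BD" and yD_in: "yD \<in> BD"
  using n2 by (auto simp: xD_def yD_def BD_def)

lemma beta_one_comm: "g \<in> carrier G0 \<Longrightarrow> \<beta> g \<one>\<^bsub>G0\<^esub> = \<beta> \<one>\<^bsub>G0\<^esub> g"
  using beta_cocycle[of g "\<one>\<^bsub>G0\<^esub>" "\<one>\<^bsub>G0\<^esub>"] beta_cocycle[of "\<one>\<^bsub>G0\<^esub>" "\<one>\<^bsub>G0\<^esub>" g]
    beta_nz[of g "\<one>\<^bsub>G0\<^esub>"] beta_nz[of "\<one>\<^bsub>G0\<^esub>" g] by simp

lemma central_coordinate_commutes:
  assumes z: "z \<in> sc_center BD (tw opD \<gamma>D)" and u: "u \<in> BD" and nz: "z u \<noteq> 0"
    and a: "a \<in> BD" and comm: "opD u a = opD a u"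
  shows "\<gamma>D u a = \<gamma>D a u"
proof -
  let ?\<delta> = "\<lambda>i. if i = a then 1 else 0"
  have "?\<delta> \<in> sc_carrier BD" using a by (auto simp: sc_carrier_def)
  hence central: "MD z ?\<delta> = MD ?\<delta> z" using z unfolding sc_center_def by blast
  have "z u * \<gamma>D u a = MD z ?\<delta> (opD u a)"
    by (rule tw_mult_basis_right[where op = opD and \<gamma> = \<gamma>D, symmetric, OF BD_finite a u opD_closed[OF u a]])
       (metis opD_cancel_right a u)
  also have "\<dots> = MD ?\<delta> z (opD a u)" using central comm by simp
  also have "\<dots> = \<gamma>D a u * z u"
    by (rule tw_mult_basis_left[where op = opD and \<gamma> = \<gamma>D, OF BD_finite a u opD_closed[OF a u]])
       (metis opD_cancel_left a u)
  finally show ?thesis using nz by (simp add: mult.commute)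
qed

text \<open>Commuting with u_1 x and u_1 y forces zeta^j = zeta^i = 1, so central elements are
  supported on the copy of G0.\<close>
lemma center_support:
  assumes z: "z \<in> sc_center BD (tw opD \<gamma>D)" and u: "(g, i, j) \<in> BD" and nz: "z (g, i, j) \<noteq> 0"
  shows "i = 0 \<and> j = 0"
proof -
  have g: "g \<in> carrier G0" "i < n" "j < n" using u by (auto simp: BD_def)
  have "\<gamma>D (g, i, j) xD = \<gamma>D xD (g, i, j)"
    by (rule central_coordinate_commutes[OF z u nz xD_in]) (use g in \<open>simp add: opD_def xD_def\<close>)
  moreover have "\<gamma>D (g, i, j) yD = \<gamma>D yD (g, i, j)"
    by (rule central_coordinate_commutes[OF z u nz yD_in]) (use g in \<open>simp add: opD_def yD_def\<close>)
  ultimately have "zinv ^ j = 1" "zinv ^ i = 1"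
    using beta_nz[OF g(1) G.one_closed] zinv_nz var_s_nz var_t_nz n2
    by (auto simp: \<gamma>D_def xD_def yD_def beta_one_comm[OF g(1)] add.commute split: if_splits)
  thus ?thesis using zinv_primitive g(2,3) by (metis neq0_conv)
qed

definition supported_on_G0 :: "('g \<times> nat \<times> nat \<Rightarrow> 'a fls fls) \<Rightarrow> bool" where
  "supported_on_G0 z \<longleftrightarrow> (\<forall>g i j. z (g, i, j) \<noteq> 0 \<longrightarrow> i = 0 \<and> j = 0)"

lemma center_supported_on_G0:
  assumes "z \<in> sc_center BD (tw opD \<gamma>D)"
  shows "supported_on_G0 z"
  unfolding supported_on_G0_def
proof (intro allI impI)
  fix g i j assume nz: "z (g, i, j) \<noteq> 0"
  hence "(g, i, j) \<in> BD" using assms by (auto simp: sc_center_def sc_carrier_def)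
  thus "i = 0 \<and> j = 0" using center_support[OF assms _ nz] by simp
qed

text \<open>The inclusion A = K^beta G0 \<rightarrow> D and the Laurent coefficients of the G0-part of
  an element of D, viewed as an element of A.\<close>
definition incl :: "('g \<Rightarrow> 'a) \<Rightarrow> 'g \<times> nat \<times> nat \<Rightarrow> 'a fls fls" where
  "incl x = (\<lambda>(g, i, j). if i = 0 \<and> j = 0 \<and> g \<in> carrier G0 then emb_KK (x g) else 0)"

definition coeff :: "('g \<times> nat \<times> nat \<Rightarrow> 'a fls fls) \<Rightarrow> int \<Rightarrow> int \<Rightarrow> 'g \<Rightarrow> 'a" where
  "coeff z b a = (\<lambda>g. if g \<in> carrier G0 then (z (g, 0, 0) $$ b) $$ a else 0)"

abbreviation MA where "MA \<equiv> sc_mult (carrier G0) (tw (\<lambda>g h. g \<otimes>\<^bsub>G0\<^esub> h) \<beta>)"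

lemma incl_in: "incl x \<in> sc_carrier BD"
  using npos by (auto simp: incl_def sc_carrier_def BD_def)

lemma sum_BD_G0:
  assumes "\<And>g i j. (g, i, j) \<in> BD \<Longrightarrow> \<not> (i = 0 \<and> j = 0) \<Longrightarrow> F (g, i, j) = 0"
  shows "(\<Sum>u\<in>BD. F u) = (\<Sum>g\<in>carrier G0. F (g, 0, 0))"
proof -
  have "(\<Sum>u\<in>BD. F u) = (\<Sum>g\<in>carrier G0. \<Sum>p\<in>{0..<n} \<times> {0..<n}. F (g, p))"
    unfolding BD_def by (simp add: sum.cartesian_product split_def)
  also have "\<dots> = (\<Sum>g\<in>carrier G0. \<Sum>p\<in>{0..<n} \<times> {0..<n}. if (0, 0) = p then F (g, 0, 0) else 0)"
  proof (intro sum.cong refl)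
    fix g p assume "g \<in> carrier G0" "p \<in> {0..<n} \<times> {0..<n}"
    thus "F (g, p) = (if (0, 0) = p then F (g, 0, 0) else 0)"
      using assms[of g "fst p" "snd p"] by (cases p) (auto simp: BD_def)
  qed
  also have "\<dots> = (\<Sum>g\<in>carrier G0. F (g, 0, 0))"
    using npos by (simp add: sum.delta')
  finally show ?thesis .
qed

lemma \<gamma>D_G0: "\<gamma>D (g, 0, 0) (h, 0, 0) = emb_KK (\<beta> g h)"
  using npos by (simp add: \<gamma>D_def)

lemma opD_G0: "opD (g, 0, 0) (h, 0, 0) = (g \<otimes>\<^bsub>G0\<^esub> h, 0, 0)"
  by (simp add: opD_def)

lemma incl_G0: "g \<in> carrier G0 \<Longrightarrow> incl x (g, 0, 0) = emb_KK (x g)"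
  by (simp add: incl_def)

lemma nth_nth_sum_emb_KK:
  "((\<Sum>g\<in>A. \<Sum>h\<in>B. if P g h then f g h * emb_KK (c g h) else 0) $$ b) $$ a =
   (\<Sum>g\<in>A. \<Sum>h\<in>B. if P g h then (f g h $$ b) $$ a * c g h else 0)"
  by (simp add: fls_nth_sum if_distrib[where f = "\<lambda>f. f $$ _"] nth_mult_emb_KK cong: if_cong)

lemma coeff_mult_incl_right:
  assumes z: "supported_on_G0 z" and m: "m \<in> carrier G0"
  shows "(MD z (incl x) (m, 0, 0) $$ b) $$ a = MA (coeff z b a) x m"
proof -
  have mB: "(m, 0, 0) \<in> BD" using m npos by (simp add: BD_def)
  have "MD z (incl x) (m, 0, 0)
      = (\<Sum>u\<in>BD. \<Sum>v\<in>BD. if opD u v = (m, 0, 0) then z u * incl x v * \<gamma>D u v else 0)"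
    using mB by (simp add: sc_mult_tw)
  also have "\<dots> = (\<Sum>g\<in>carrier G0. \<Sum>v\<in>BD.
      if opD (g, 0, 0) v = (m, 0, 0) then z (g, 0, 0) * incl x v * \<gamma>D (g, 0, 0) v else 0)"
  proof (rule sum_BD_G0)
    fix g and i j :: nat assume "\<not> (i = 0 \<and> j = 0)"
    hence "z (g, i, j) = 0" using z by (auto simp: supported_on_G0_def)
    thus "(\<Sum>v\<in>BD. if opD (g, i, j) v = (m, 0, 0) then z (g, i, j) * incl x v * \<gamma>D (g, i, j) v else 0) = 0"
      by (intro sum.neutral) simp
  qed
  also have "\<dots> = (\<Sum>g\<in>carrier G0. \<Sum>h\<in>carrier G0.
      if g \<otimes>\<^bsub>G0\<^esub> h = m then z (g, 0, 0) * emb_KK (x h * \<beta> g h) else 0)"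
    by (intro sum.cong refl, subst sum_BD_G0)
       (auto simp: incl_def intro!: sum.cong simp: opD_G0 incl_G0 \<gamma>D_G0 emb_KK_mult mult.assoc)
  finally show ?thesis
    using m by (simp add: nth_nth_sum_emb_KK sc_mult_tw coeff_def mult_ac cong: if_cong)
qed

lemma coeff_mult_incl_left:
  assumes z: "supported_on_G0 z" and m: "m \<in> carrier G0"
  shows "(MD (incl x) z (m, 0, 0) $$ b) $$ a = MA x (coeff z b a) m"
proof -
  have mB: "(m, 0, 0) \<in> BD" using m npos by (simp add: BD_def)
  have "MD (incl x) z (m, 0, 0)
      = (\<Sum>u\<in>BD. \<Sum>v\<in>BD. if opD u v = (m, 0, 0) then incl x u * z v * \<gamma>D u v else 0)"
    using mB by (simp add: sc_mult_tw)
  also have "\<dots> = (\<Sum>g\<in>carrier G0. \<Sum>v\<in>BD.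
      if opD (g, 0, 0) v = (m, 0, 0) then incl x (g, 0, 0) * z v * \<gamma>D (g, 0, 0) v else 0)"
    by (rule sum_BD_G0) (auto simp: incl_def intro!: sum.neutral)
  also have "\<dots> = (\<Sum>g\<in>carrier G0. \<Sum>h\<in>carrier G0.
      if g \<otimes>\<^bsub>G0\<^esub> h = m then z (h, 0, 0) * emb_KK (x g * \<beta> g h) else 0)"
    using z by (intro sum.cong refl, subst sum_BD_G0)
      (auto simp: supported_on_G0_def intro!: sum.cong simp: opD_G0 incl_G0 \<gamma>D_G0 emb_KK_mult mult_ac)
  finally show ?thesis
    using m by (simp add: nth_nth_sum_emb_KK sc_mult_tw coeff_def mult_ac cong: if_cong)
qed

end


context symbol_extension
begin

definition eA where
  "eA = (SOME e. sc_unit (carrier G0) (tw (\<lambda>g h. g \<otimes>\<^bsub>G0\<^esub> h) \<beta>) e \<and> e \<noteq> (\<lambda>_. 0))"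

lemma eA_unit: "sc_unit (carrier G0) (tw (\<lambda>g h. g \<otimes>\<^bsub>G0\<^esub> h) \<beta>) eA" and eA_nz: "eA \<noteq> (\<lambda>_. 0)"
proof -
  have "\<exists>e. sc_unit (carrier G0) (tw (\<lambda>g h. g \<otimes>\<^bsub>G0\<^esub> h) \<beta>) e \<and> e \<noteq> (\<lambda>_. 0)"
    using central_division
    unfolding sc_central_division_algebra_def sc_division_algebra_def twisted_eq by blast
  thus "sc_unit (carrier G0) (tw (\<lambda>g h. g \<otimes>\<^bsub>G0\<^esub> h) \<beta>) eA" "eA \<noteq> (\<lambda>_. 0)"
    unfolding eA_def by (metis (mono_tags, lifting) someI_ex)+
qed

lemma A_center: "w \<in> sc_center (carrier G0) (tw (\<lambda>g h. g \<otimes>\<^bsub>G0\<^esub> h) \<beta>) \<Longrightarrow> \<exists>a. w = (\<lambda>i. a * eA i)"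
  using central_division eA_unit unfolding sc_central_division_algebra_def twisted_eq by blast

lemma coeff_central:
  assumes z: "z \<in> sc_center BD (tw opD \<gamma>D)"
  shows "coeff z b a \<in> sc_center (carrier G0) (tw (\<lambda>g h. g \<otimes>\<^bsub>G0\<^esub> h) \<beta>)"
  unfolding sc_center_def
proof (intro CollectI conjI ballI)
  show "coeff z b a \<in> sc_carrier (carrier G0)" by (auto simp: coeff_def sc_carrier_def)
next
  fix x :: "'g \<Rightarrow> 'a" assume "x \<in> sc_carrier (carrier G0)"
  have supp: "supported_on_G0 z" by (rule center_supported_on_G0[OF z])
  have comm: "MD z (incl x) = MD (incl x) z" using z incl_in by (simp add: sc_center_def)
  show "MA (coeff z b a) x = MA x (coeff z b a)"
  proof
    fix m show "MA (coeff z b a) x m = MA x (coeff z b a) m"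
      using coeff_mult_incl_right[OF supp, of m x b a] coeff_mult_incl_left[OF supp, of m x b a] comm
      by (cases "m \<in> carrier G0") (simp_all add: sc_mult_tw)
  qed
qed

lemma central_G0_part_proportional:
  assumes z: "z \<in> sc_center BD (tw opD \<gamma>D)" and g: "g \<in> carrier G0" and h: "h \<in> carrier G0"
  shows "z (g, 0, 0) * emb_KK (eA h) = z (h, 0, 0) * emb_KK (eA g)"
proof -
  have "(z (g, 0, 0) $$ b) $$ a * eA h = (z (h, 0, 0) $$ b) $$ a * eA g" for a b
  proof -
    obtain l where "coeff z b a = (\<lambda>i. l * eA i)" using A_center[OF coeff_central[OF z]] by blast
    hence "coeff z b a g = l * eA g" "coeff z b a h = l * eA h" by metis+
    thus ?thesis using g h by (simp add: coeff_def mult_ac)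
  qed
  thus ?thesis by (simp add: fls_eq_iff nth_mult_emb_KK)
qed

lemma eD_center: "eD \<in> sc_center BD (tw opD \<gamma>D)"
  using D_unit by (simp add: sc_center_def sc_unit_def)

lemma eD_oneD: "eD oneD \<noteq> 0" and eD_off_oneD: "u \<noteq> oneD \<Longrightarrow> eD u = 0"
  using \<gamma>D_nz[OF oneD_in oneD_in] by (simp_all add: eD_def)

text \<open>Comparing with the central element e_D shows that e_A is supported at 1, and then
  that every central element of D is supported at the identity basis element.\<close>
lemma center_supported_at_oneD:
  assumes z: "z \<in> sc_center BD (tw opD \<gamma>D)" and nz: "z u \<noteq> 0"
  shows "u = oneD"
proof -
  let ?o = "\<one>\<^bsub>G0\<^esub>"
  have "z \<in> sc_carrier BD" using z by (simp add: sc_center_def)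
  hence u: "u \<in> BD" using nz unfolding sc_carrier_def by blast
  obtain g i j where u_ij: "u = (g, i, j)" by (cases u)
  hence g: "g \<in> carrier G0" using u by (simp add: BD_def)
  have "i = 0 \<and> j = 0" using center_support[OF z] u nz u_ij by simp
  hence u_eq: "u = (g, 0, 0)" using u_ij by simp
  obtain h where h: "h \<in> carrier G0" "eA h \<noteq> 0"
    using eA_unit eA_nz by (auto simp: sc_unit_def sc_carrier_def fun_eq_iff)
  have "eD (?o, 0, 0) * emb_KK (eA h) = eD (h, 0, 0) * emb_KK (eA ?o)"
    by (rule central_G0_part_proportional[OF eD_center G.one_closed h(1)])
  hence eA_one: "eA ?o \<noteq> 0" using eD_oneD h(2) by (auto simp: oneD_def)
  show ?thesis
  proof (rule ccontr)
    assume "u \<noteq> oneD"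
    hence "eD (g, 0, 0) = 0" using eD_off_oneD u_eq by simp
    moreover have "eD (g, 0, 0) * emb_KK (eA ?o) = eD (?o, 0, 0) * emb_KK (eA g)"
      by (rule central_G0_part_proportional[OF eD_center g G.one_closed])
    ultimately have "eA g = 0" using eD_oneD by (simp add: oneD_def)
    moreover have "z (g, 0, 0) * emb_KK (eA ?o) = z (?o, 0, 0) * emb_KK (eA g)"
      by (rule central_G0_part_proportional[OF z g G.one_closed])
    ultimately show False using nz u_eq eA_one by simp
  qed
qed

lemma D_center: "sc_center BD (tw opD \<gamma>D) = {(\<lambda>i. a * eD i) | a. True}"
proof (intro equalityI subsetI)
  fix z assume z: "z \<in> sc_center BD (tw opD \<gamma>D)"
  have "z u = (z oneD / eD oneD) * eD u" for u
    using center_supported_at_oneD[OF z, of u] eD_oneD eD_off_oneD[of u]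
    by (cases "u = oneD") auto
  hence "z = (\<lambda>i. (z oneD / eD oneD) * eD i)" by blast
  thus "z \<in> {(\<lambda>i. a * eD i) | a. True}" by blast
next
  fix z assume "z \<in> {(\<lambda>i. a * eD i) | a. True}"
  then obtain a where z: "z = sc_scale a eD" by (auto simp: sc_scale_def)
  have eD: "eD \<in> sc_carrier BD" using D_unit by (simp add: sc_unit_def)
  show "z \<in> sc_center BD (tw opD \<gamma>D)"
    unfolding sc_center_def z
  proof (intro CollectI conjI ballI)
    show "sc_scale a eD \<in> sc_carrier BD" using eD by (auto simp: sc_carrier_def sc_scale_def)
  next
    fix x :: "'g \<times> nat \<times> nat \<Rightarrow> 'a fls fls" assume "x \<in> sc_carrier BD"
    thus "MD (sc_scale a eD) x = MD x (sc_scale a eD)"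
      unfolding sc_mult_scale_left sc_mult_scale_right using D_unit by (simp add: sc_unit_def)
  qed
qed

theorem D_central_division: "sc_central_division_algebra BD (tw opD \<gamma>D)"
  unfolding sc_central_division_algebra_def sc_division_algebra_def
proof (intro conjI allI impI)
  show "finite BD" by (rule BD_finite)
  show "\<forall>x\<in>sc_carrier BD. \<forall>y\<in>sc_carrier BD. \<forall>z\<in>sc_carrier BD. MD (MD x y) z = MD x (MD y z)"
    by (simp add: D_assoc)
  show "\<exists>e. sc_unit BD (tw opD \<gamma>D) e \<and> e \<noteq> (\<lambda>_. 0) \<and>
        (\<forall>x\<in>sc_carrier BD. x \<noteq> (\<lambda>_. 0) \<longrightarrow> (\<exists>y\<in>sc_carrier BD. MD x y = e \<and> MD y x = e))"
    using D_unit eD_nz D_division by blast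
next
  fix e assume "sc_unit BD (tw opD \<gamma>D) e"
  hence "e = eD" using D_unit unfolding sc_unit_def by metis
  thus "sc_center BD (tw opD \<gamma>D) = {(\<lambda>i. a * e i) | a. True}" using D_center by simp
qed

section \<open>D as a twisted group algebra of G0 \<times> Z_n \<times> Z_n\<close>

abbreviation PG where "PG \<equiv> G0 \<times>\<times> (integer_mod_group n \<times>\<times> integer_mod_group n)"

lemma carrier_PG: "carrier PG = carrier G0 \<times> ({0..<int n} \<times> {0..<int n})"
  using npos by (simp add: DirProd_def carrier_integer_mod_group)

lemma mult_PG: "(g, i, j) \<otimes>\<^bsub>PG\<^esub> (h, a, b) = (g \<otimes>\<^bsub>G0\<^esub> h, (i + a) mod int n, (j + b) mod int n)"
  using npos by (simp add: DirProd_def integer_mod_group_def)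

text \<open>Relabelling the residues {0..<n} as natural numbers matches the group law of PG with
  opD; alpha is gamma_D transported along this relabelling.\<close>
definition relabel :: "'g \<times> int \<times> int \<Rightarrow> 'g \<times> nat \<times> nat" where
  "relabel = (\<lambda>(g, i, j). (g, nat i, nat j))"

definition \<alpha> :: "'g \<times> int \<times> int \<Rightarrow> 'g \<times> int \<times> int \<Rightarrow> 'a fls fls" where
  "\<alpha> u v = \<gamma>D (relabel u) (relabel v)"

lemma relabel_bij: "bij_betw relabel (carrier PG) BD"
  unfolding carrier_PG
  by (rule bij_betwI[where g = "\<lambda>(g, i, j). (g, int i, int j)"]) (auto simp: relabel_def BD_def)

lemma relabel_in: "u \<in> carrier PG \<Longrightarrow> relabel u \<in> BD"
  using relabel_bij by (auto simp: bij_betw_def)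

lemma relabel_mult: "u \<in> carrier PG \<Longrightarrow> v \<in> carrier PG \<Longrightarrow> relabel (u \<otimes>\<^bsub>PG\<^esub> v) = opD (relabel u) (relabel v)"
  using npos by (auto simp: carrier_PG carrier_integer_mod_group relabel_def opD_def mult_PG
      nat_mod_distrib nat_add_distrib)

lemma \<alpha>_cocycle: "cocycle2 PG \<alpha>"
  unfolding cocycle2_def \<alpha>_def
  using relabel_in \<gamma>D_nz \<gamma>D_cocycle by (simp add: relabel_mult G.m_closed)

lemma PG_group: "group PG"
  by (simp add: DirProd_group grp)

lemma twisted_PG_relabel:
  assumes u: "u \<in> carrier PG" and v: "v \<in> carrier PG" and w: "w \<in> carrier PG"
  shows "twisted_sc PG \<alpha> u v w = tw opD \<gamma>D (relabel u) (relabel v) (relabel w)"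
proof -
  have "u \<otimes>\<^bsub>PG\<^esub> v \<in> carrier PG" by (rule monoid.m_closed[OF group.is_monoid[OF PG_group] u v])
  hence "w = u \<otimes>\<^bsub>PG\<^esub> v \<longleftrightarrow> relabel w = relabel (u \<otimes>\<^bsub>PG\<^esub> v)"
    using relabel_bij w by (auto simp: bij_betw_def inj_on_def)
  thus ?thesis unfolding twisted_sc_def tw_def \<alpha>_def relabel_mult[OF u v] by simp
qed

definition transport :: "('g \<times> nat \<times> nat \<Rightarrow> 'a fls fls) \<Rightarrow> 'g \<times> int \<times> int \<Rightarrow> 'a fls fls" where
  "transport x = (\<lambda>w. if w \<in> carrier PG then x (relabel w) else 0)"

lemma transport_bij: "bij_betw transport (sc_carrier BD) (sc_carrier (carrier PG))"
proof (rule bij_betwI[where g = "\<lambda>y u. if u \<in> BD then y (inv_into (carrier PG) relabel u) else 0"])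
  show "transport \<in> sc_carrier BD \<rightarrow> sc_carrier (carrier PG)"
    by (auto simp: transport_def sc_carrier_def)
  show "(\<lambda>y u. if u \<in> BD then y (inv_into (carrier PG) relabel u) else 0)
      \<in> sc_carrier (carrier PG) \<rightarrow> sc_carrier BD"
    by (auto simp: sc_carrier_def)
next
  fix x :: "'g \<times> nat \<times> nat \<Rightarrow> 'a fls fls" assume "x \<in> sc_carrier BD"
  thus "(\<lambda>u. if u \<in> BD then transport x (inv_into (carrier PG) relabel u) else 0) = x"
    using relabel_bij by (auto simp: transport_def sc_carrier_def fun_eq_iff bij_betw_inv_into_right
        inv_into_into bij_betw_def)
next
  fix y :: "'g \<times> int \<times> int \<Rightarrow> 'a fls fls" assume "y \<in> sc_carrier (carrier PG)"
  thus "transport (\<lambda>u. if u \<in> BD then y (inv_into (carrier PG) relabel u) else 0) = y"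
    using relabel_bij relabel_in by (auto simp: transport_def sc_carrier_def fun_eq_iff
        bij_betw_inv_into_left)
qed

lemma transport_mult: "transport (MD x y) = sc_mult (carrier PG) (twisted_sc PG \<alpha>) (transport x) (transport y)"
proof
  fix m
  show "transport (MD x y) m = sc_mult (carrier PG) (twisted_sc PG \<alpha>) (transport x) (transport y) m"
  proof (cases "m \<in> carrier PG")
    case True
    have inv: "transport f (inv_into (carrier PG) relabel i) = f i" if "i \<in> BD" for f i
      using relabel_bij that by (simp add: transport_def bij_betw_inv_into_right inv_into_into bij_betw_def)
    have "sc_mult (carrier PG) (twisted_sc PG \<alpha>) (transport x) (transport y) m =
        MD (\<lambda>i. transport x (inv_into (carrier PG) relabel i))
           (\<lambda>i. transport y (inv_into (carrier PG) relabel i)) (relabel m)"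
      by (rule sc_mult_reindex[where c = "tw opD \<gamma>D" and c' = "twisted_sc PG \<alpha>", symmetric,
            OF relabel_bij twisted_PG_relabel True])
    also have "\<dots> = MD x y (relabel m)" by (intro fun_cong[OF sc_mult_cong] inv)
    finally show ?thesis using True by (simp add: transport_def)
  qed (simp add: transport_def sc_mult_def)
qed

theorem D_iso_twisted_group_algebra: "sc_iso BD (tw opD \<gamma>D) (carrier PG) (twisted_sc PG \<alpha>)"
  unfolding sc_iso_def
  by (intro exI[of _ transport] conjI ballI allI transport_bij transport_mult)
     (auto simp: transport_def)

lemma \<alpha>_restricts_to_\<beta>: "\<alpha> (g, 0, 0) (h, 0, 0) = emb_KK (\<beta> g h)"
  by (simp add: \<alpha>_def relabel_def \<gamma>D_G0)

end

theorem mainTheorem7: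
  fixes p r :: nat
    and G0 :: "('g, 'x) monoid_scheme"
    and \<zeta> :: "'a::field"
    and \<beta> :: "'g \<Rightarrow> 'g \<Rightarrow> 'a"
  assumes "prime p" and "r \<ge> 1"
    and "group G0" and "finite (carrier G0)"
    and "\<zeta> ^ (p ^ r) = 1" and "\<forall>m. 0 < m \<and> m < p ^ r \<longrightarrow> \<zeta> ^ m \<noteq> 1"
    and "cocycle2 G0 \<beta>"
    and "sc_central_division_algebra (carrier G0) (twisted_sc G0 \<beta>)"
  shows "sc_central_division_algebra (carrier G0 \<times> symbol_basis (p ^ r))
           (sc_tensor (sc_base_change emb_KK (twisted_sc G0 \<beta>))
                      (symbol_sc (p ^ r) (emb_KK \<zeta>) var_s var_t))
       \<and> (\<exists>\<alpha> :: ('g \<times> int \<times> int) \<Rightarrow> ('g \<times> int \<times> int) \<Rightarrow> 'a fls fls.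
            cocycle2 (G0 \<times>\<times> (integer_mod_group (p ^ r) \<times>\<times> integer_mod_group (p ^ r))) \<alpha>
          \<and> sc_iso (carrier G0 \<times> symbol_basis (p ^ r))
                   (sc_tensor (sc_base_change emb_KK (twisted_sc G0 \<beta>))
                              (symbol_sc (p ^ r) (emb_KK \<zeta>) var_s var_t))
                   (carrier (G0 \<times>\<times> (integer_mod_group (p ^ r) \<times>\<times> integer_mod_group (p ^ r))))
                   (twisted_sc (G0 \<times>\<times> (integer_mod_group (p ^ r) \<times>\<times> integer_mod_group (p ^ r))) \<alpha>)
          \<and> (\<exists>\<mu> :: 'g \<Rightarrow> 'a fls fls. (\<forall>g\<in>carrier G0. \<mu> g \<noteq> 0) \<and>
               (\<forall>g\<in>carrier G0. \<forall>h\<in>carrier G0.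
                  \<alpha> (g, 0, 0) (h, 0, 0)
                    = emb_KK (\<beta> g h) * \<mu> g * \<mu> h / \<mu> (g \<otimes>\<^bsub>G0\<^esub> h))))"
proof -
  have "2 \<le> p" using \<open>prime p\<close> by (simp add: prime_ge_2_nat)
  moreover have "p \<le> p ^ r" using \<open>r \<ge> 1\<close> \<open>2 \<le> p\<close> by (simp add: self_le_power)
  ultimately have "2 \<le> p ^ r" by linarith
  then interpret D: symbol_extension G0 "p ^ r" \<zeta> \<beta>
    using assms by (simp add: symbol_extension_def)
  have basis: "carrier G0 \<times> symbol_basis (p ^ r) = D.BD"
    by (simp add: D.BD_def symbol_basis_def)
  (* alpha restricts to beta on G0 itself, so the trivial coboundary mu = 1 works *)
  show ?thesis
    unfolding basis D.D_structure_constants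
    using D.D_central_division D.\<alpha>_cocycle D.D_iso_twisted_group_algebra D.\<alpha>_restricts_to_\<beta>
    by (intro conjI exI[of _ D.\<alpha>] exI[of _ "\<lambda>_. 1"]) simp_all
qed

end
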